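(* Let $P,A_I,A_O,B_I,B_O,F$ be finite-dimensional Hilbert spaces with $\dim A_I=\dim A_O=\dim B_I=\dim B_O=d$ and $\dim P=\dim F=D$, and let $U:P\otimes A_O\otimes B_O\to A_I\otimes B_I\otimes F$ be a unitary operator representing a direct sum of pure combs with two slots $A$ and $B$. (1) If $D=d$, then $U$ is causally ordered, and either $U=U_0^{P\to A_I}\otimes U_1^{A_O\to B_I}\otimes U_2^{B_O\to F}$ for some unitaries $U_0:P\to A_I$, $U_1:A_O\to B_I$, $U_2:B_O\to F$, or $U=V_0^{P\to B_I}\otimes V_1^{B_O\to A_I}\otimes V_2^{A_O\to F}$ for some unitaries $V_0:P\to B_I$, $V_1:B_O\to A_I$, $V_2:A_O\to F$. (2) If $D=2d$, then either $U$ is causally ordered, or there are tensor decompositions $P=P_c\otimes P_t$, $F=F_c\otimes F_t$ with $\dim P_c=\dim F_c=2$, $\dim P_t=\dim F_t=d$, orthonormal bases $\{|0\rangle,|1\rangle\}$ of $P_c$ and of $F_c$, and unitaries $U_0:P_t\to A_I$, $U_1:A_O\to B_I$, $U_2:B_O\to F_t$, $V_0:P_t\to B_I$, $V_1:B_O\to A_I$, $V_2:A_O\to F_t$ such that $$U=|0\rangle^{F_c}\langle0|^{P_c}\otimes U_0^{P_t\to A_I}\otimes U_1^{A_O\to B_I}\otimes U_2^{B_O\to F_t}+|1\rangle^{F_c}\langle1|^{P_c}\otimes V_0^{P_t\to B_I}\otimes V_1^{B_O\to A_I}\otimes V_2^{A_O\to F_t}.$$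
   Context: Choi vector of $X:\mathcal{H}_I\to\mathcal{H}_O$: $|X\rangle\rangle=\sum_i|i\rangle\otimes X|i\rangle$. A unitary $V:P'\otimes A_O\otimes B_O\to A_I\otimes B_I\otimes F'$ represents the two-slot supermap (slots $A$: $A_I\to A_O$, $B$: $B_I\to B_O$, global past $P'$, global future $F'$) with Choi operator $|V\rangle\rangle\langle\langle V|$. It represents a quantum comb of $A\prec B$ if this Choi operator $W\ge0$ satisfies $\mathrm{Tr}_{F'}W=1^{B_O}\otimes R_2$, $\mathrm{Tr}_{B_I}R_2=1^{A_O}\otimes R_1$, $\mathrm{Tr}_{A_I}R_1=1^{P'}$ for some $R_2,R_1$ (realizable by a circuit using $A$ before $B$); comb of $B\prec A$ with $A,B$ exchanged. "$U$ is causally ordered" means $U$ represents a quantum comb of $A\prec B$ or of $B\prec A$. $U$ represents a direct sum of pure combs if there are orthogonal decompositions $P=P^{A\prec B}\oplus P^{B\prec A}$, $F=F^{A\prec B}\oplus F^{B\prec A}$ and unitaries $U^{A\prec B}:P^{A\prec B}\otimes A_O\otimes B_O\to A_I\otimes B_I\otimes F^{A\prec B}$ representing a comb of $A\prec B$ and $U^{B\prec A}:P^{B\prec A}\otimes A_O\otimes B_O\to A_I\otimes B_I\otimes F^{B\prec A}$ representing a comb of $B\prec A$, with $U=U^{A\prec B}\oplus U^{B\prec A}$. In tensor products of operators with superscripts $X\to Y$, each factor maps the indicated input space to the indicated output space, and the factors are arranged so that the product maps $P\otimes A_O\otimes B_O$ to $A_I\otimes B_I\otimes F$. *)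

theory Defs
  imports "Jordan_Normal_Form.Matrix" "HOL.Complex"
begin

(* Finite-dimensional Hilbert spaces are C^n with the standard (orthonormal) basis;
   operators X : C^m -> C^n are complex n x m matrices (Jordan_Normal_Form).
   Tensor products use the lexicographic index convention:
   C^n1 (x) C^n2 (x) C^n3 has basis index (i1*n2 + i2)*n3 + i3. *)

definition tidx3 :: "nat \<Rightarrow> nat \<Rightarrow> nat \<Rightarrow> nat \<Rightarrow> nat \<Rightarrow> nat" where
  "tidx3 n2 n3 i1 i2 i3 = (i1 * n2 + i2) * n3 + i3"

definition tidx2 :: "nat \<Rightarrow> nat \<Rightarrow> nat \<Rightarrow> nat" where
  "tidx2 n2 i1 i2 = i1 * n2 + i2"

definition adj :: "complex mat \<Rightarrow> complex mat" where
  "adj A = mat (dim_col A) (dim_row A) (\<lambda>(i,j). cnj (A $$ (j,i)))"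

definition unitary_mat :: "nat \<Rightarrow> complex mat \<Rightarrow> bool" where
  "unitary_mat n A \<longleftrightarrow> A \<in> carrier_mat n n \<and> A * adj A = 1\<^sub>m n \<and> adj A * A = 1\<^sub>m n"

definition isometry_mat :: "nat \<Rightarrow> nat \<Rightarrow> complex mat \<Rightarrow> bool" where
  "isometry_mat n m J \<longleftrightarrow> J \<in> carrier_mat n m \<and> adj J * J = 1\<^sub>m m"

definition kron :: "complex mat \<Rightarrow> complex mat \<Rightarrow> complex mat" where
  "kron A B = mat (dim_row A * dim_row B) (dim_col A * dim_col B)
     (\<lambda>(i,j). A $$ (i div dim_row B, j div dim_col B) * B $$ (i mod dim_row B, j mod dim_col B))"

(* Matrix entry of V : P (x) A_O (x) B_O -> A_I (x) B_I (x) F, i.e.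
   <ai,bi,f| V |p,ao,bo>;  dims: aI bI f (output), aO bO (input, besides P). *)
definition opent :: "nat \<Rightarrow> nat \<Rightarrow> nat \<Rightarrow> nat \<Rightarrow> nat \<Rightarrow> complex mat
    \<Rightarrow> nat \<Rightarrow> nat \<Rightarrow> nat \<Rightarrow> nat \<Rightarrow> nat \<Rightarrow> nat \<Rightarrow> complex" where
  "opent aI bI f aO bO V ai bi fi p ao bo = V $$ (tidx3 bI f ai bi fi, tidx3 aO bO p ao bo)"

(* Choi operator W = |V>><<V| on P (x) A_O (x) B_O (x) A_I (x) B_I (x) F, where
   |V>> = sum_i |i> (x) V|i>.  Entries indexed by tuples (p,ao,bo,ai,bi,f). *)
type_synonym idx6 = "nat \<times> nat \<times> nat \<times> nat \<times> nat \<times> nat"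

definition choi :: "nat \<Rightarrow> nat \<Rightarrow> nat \<Rightarrow> nat \<Rightarrow> nat \<Rightarrow> complex mat \<Rightarrow> idx6 \<Rightarrow> idx6 \<Rightarrow> complex" where
  "choi aI aO bI bO f V x y =
     (case x of (p,ao,bo,ai,bi,fi) \<Rightarrow> case y of (p',ao',bo',ai',bi',fi') \<Rightarrow>
        opent aI bI f aO bO V ai bi fi p ao bo * cnj (opent aI bI f aO bO V ai' bi' fi' p' ao' bo'))"

definition kd :: "nat \<Rightarrow> nat \<Rightarrow> complex" where
  "kd i j = (if i = j then 1 else 0)"

(* V (with Hilbert spaces P,A_I,A_O,B_I,B_O,F of dims p,aI,aO,bI,bO,f) represents a
   quantum comb of A \<prec> B: Tr_F W = 1^{B_O} (x) R2, Tr_{B_I} R2 = 1^{A_O} (x) R1,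
   Tr_{A_I} R1 = 1^P, written out entrywise in the standard bases.
   R2 is an operator on P (x) A_O (x) A_I (x) B_I, R1 on P (x) A_I.
   (W \<ge> 0 holds automatically since W is rank one.) *)
definition comb_AB :: "nat \<Rightarrow> nat \<Rightarrow> nat \<Rightarrow> nat \<Rightarrow> nat \<Rightarrow> nat \<Rightarrow> complex mat \<Rightarrow> bool" where
  "comb_AB p aI aO bI bO f V \<longleftrightarrow>
   (\<exists>R2 :: (nat \<times> nat \<times> nat \<times> nat) \<Rightarrow> (nat \<times> nat \<times> nat \<times> nat) \<Rightarrow> complex.
    \<exists>R1 :: (nat \<times> nat) \<Rightarrow> (nat \<times> nat) \<Rightarrow> complex.
     (\<forall>q<p. \<forall>ao<aO. \<forall>bo<bO. \<forall>ai<aI. \<forall>bi<bI.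
      \<forall>q'<p. \<forall>ao'<aO. \<forall>bo'<bO. \<forall>ai'<aI. \<forall>bi'<bI.
        (\<Sum>fi<f. choi aI aO bI bO f V (q,ao,bo,ai,bi,fi) (q',ao',bo',ai',bi',fi))
          = kd bo bo' * R2 (q,ao,ai,bi) (q',ao',ai',bi')) \<and>
     (\<forall>q<p. \<forall>ao<aO. \<forall>ai<aI. \<forall>q'<p. \<forall>ao'<aO. \<forall>ai'<aI.
        (\<Sum>bi<bI. R2 (q,ao,ai,bi) (q',ao',ai',bi)) = kd ao ao' * R1 (q,ai) (q',ai')) \<and>
     (\<forall>q<p. \<forall>q'<p. (\<Sum>ai<aI. R1 (q,ai) (q',ai)) = kd q q'))"

(* comb of B \<prec> A: the same with A and B exchanged. R2 on P (x) B_O (x) A_I (x) B_I,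
   R1 on P (x) B_I. *)
definition comb_BA :: "nat \<Rightarrow> nat \<Rightarrow> nat \<Rightarrow> nat \<Rightarrow> nat \<Rightarrow> nat \<Rightarrow> complex mat \<Rightarrow> bool" where
  "comb_BA p aI aO bI bO f V \<longleftrightarrow>
   (\<exists>R2 :: (nat \<times> nat \<times> nat \<times> nat) \<Rightarrow> (nat \<times> nat \<times> nat \<times> nat) \<Rightarrow> complex.
    \<exists>R1 :: (nat \<times> nat) \<Rightarrow> (nat \<times> nat) \<Rightarrow> complex.
     (\<forall>q<p. \<forall>ao<aO. \<forall>bo<bO. \<forall>ai<aI. \<forall>bi<bI.
      \<forall>q'<p. \<forall>ao'<aO. \<forall>bo'<bO. \<forall>ai'<aI. \<forall>bi'<bI.
        (\<Sum>fi<f. choi aI aO bI bO f V (q,ao,bo,ai,bi,fi) (q',ao',bo',ai',bi',fi))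
          = kd ao ao' * R2 (q,bo,ai,bi) (q',bo',ai',bi')) \<and>
     (\<forall>q<p. \<forall>bo<bO. \<forall>bi<bI. \<forall>q'<p. \<forall>bo'<bO. \<forall>bi'<bI.
        (\<Sum>ai<aI. R2 (q,bo,ai,bi) (q',bo',ai,bi')) = kd bo bo' * R1 (q,bi) (q',bi')) \<and>
     (\<forall>q<p. \<forall>q'<p. (\<Sum>bi<bI. R1 (q,bi) (q',bi)) = kd q q'))"

definition causally_ordered :: "nat \<Rightarrow> nat \<Rightarrow> nat \<Rightarrow> nat \<Rightarrow> nat \<Rightarrow> nat \<Rightarrow> complex mat \<Rightarrow> bool" where
  "causally_ordered p aI aO bI bO f V \<longleftrightarrow>
     comb_AB p aI aO bI bO f V \<or> comb_BA p aI aO bI bO f V"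

(* The orthogonal decompositions P = P1 \<oplus> P2, F = F1 \<oplus> F2 are given by
   orthonormal bases, i.e. isometries J1 : C^p1 -> P, J2 : C^p2 -> P with orthogonal ranges
   and p1 + p2 = D (similarly K1, K2 for F). U = U1 \<oplus> U2 means
   U (J_k (x) 1 (x) 1) = (1 (x) 1 (x) K_k) U_k for k = 1,2. *)
definition direct_sum_pure_combs :: "nat \<Rightarrow> nat \<Rightarrow> complex mat \<Rightarrow> bool" where
  "direct_sum_pure_combs d D U \<longleftrightarrow>
   (\<exists>p1 p2 f1 f2 J1 J2 K1 K2 U1 U2.
      p1 + p2 = D \<and> f1 + f2 = D \<and>
      isometry_mat D p1 J1 \<and> isometry_mat D p2 J2 \<and> adj J1 * J2 = 0\<^sub>m p1 p2 \<and>
      isometry_mat D f1 K1 \<and> isometry_mat D f2 K2 \<and> adj K1 * K2 = 0\<^sub>m f1 f2 \<and>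
      U1 \<in> carrier_mat (d*d*f1) (p1*d*d) \<and> unitary_mat (p1*d*d) U1 \<and>
      U2 \<in> carrier_mat (d*d*f2) (p2*d*d) \<and> unitary_mat (p2*d*d) U2 \<and>
      comb_AB p1 d d d d f1 U1 \<and> comb_BA p2 d d d d f2 U2 \<and>
      U * kron (kron J1 (1\<^sub>m d)) (1\<^sub>m d) = kron (kron (1\<^sub>m d) (1\<^sub>m d)) K1 * U1 \<and>
      U * kron (kron J2 (1\<^sub>m d)) (1\<^sub>m d) = kron (kron (1\<^sub>m d) (1\<^sub>m d)) K2 * U2)"

end

theory Submission
  imports Defs "Jordan_Normal_Form.Determinant"
begin

text \<open>Write a pure comb of \<open>A \<prec> B\<close> with past \<open>P\<close> as its entry function \<open>T(a\<^sub>I, b\<^sub>I, f; p, a\<^sub>O, b\<^sub>O)\<close>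
  and fix the last output \<open>b\<^sub>O\<close>. The comb condition \<open>Tr\<^sub>F W = 1 \<otimes> R\<^sub>2\<close> (identity on \<open>B\<^sub>O\<close>) says that the vectors
  \<open>T(\<dots>, b\<^sub>O) \<in> F\<close> for different \<open>b\<^sub>O\<close> span mutually orthogonal subspaces with a common Gram
  matrix, and unitarity makes all of them together a tight frame of \<open>F\<close>. If \<open>0 < dim P < 2 d\<close>,
  these \<open>d\<close> subspaces cannot be more than lines, so \<open>dim P = d\<close> and a unitary \<open>B\<^sub>O \<rightarrow> F\<close>
  splits off. The same argument applied to \<open>R\<^sub>2 = 1 \<otimes> R\<^sub>1\<close> (identity on \<open>A\<^sub>O\<close>) splits off a unitary
  \<open>A\<^sub>O \<rightarrow> B\<^sub>I\<close>, and what remains is a unitary \<open>P \<rightarrow> A\<^sub>I\<close>.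

  In a direct sum of two pure combs with \<open>dim P\<^sub>1 + dim P\<^sub>2 = D \<le> 2 d\<close>, either one summand is
  empty, and \<open>U\<close> is a single comb up to unitaries on \<open>P\<close> and \<open>F\<close>, or both summands have
  \<open>dim P\<^sub>i = d\<close> and factorize as above; this is impossible for \<open>D = d\<close> and gives the
  block form for \<open>D = 2 d\<close>.\<close>

section \<open>Kronecker deltas and matrix entries\<close>

lemma kd_simps [simp]: "kd i i = 1" "i \<noteq> j \<Longrightarrow> kd i j = 0"
  by (auto simp: kd_def)

lemma kd_commute: "kd i j = kd j i"
  by (auto simp: kd_def)

lemma cnj_kd [simp]: "cnj (kd i j) = kd i j"
  by (auto simp: kd_def)

lemma sum_kd_right [simp]: "b < n \<Longrightarrow> (\<Sum>a<n. g a * kd a b) = g b"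
  by (simp add: kd_def if_distrib[of "\<lambda>x. _ * x"] sum.delta' cong: if_cong)

lemma sum_kd_right' [simp]: "b < n \<Longrightarrow> (\<Sum>a<n. g a * kd b a) = g b"
  by (subst kd_commute) simp

lemma sum_kd_left [simp]: "b < n \<Longrightarrow> (\<Sum>a<n. kd a b * g a) = g b"
  using sum_kd_right[of b n g] by (simp add: mult.commute)

lemma sum_kd_left' [simp]: "b < n \<Longrightarrow> (\<Sum>a<n. kd b a * g a) = g b"
  by (subst kd_commute) simp

lemma sum_mult_cnj_self: "(\<Sum>j\<in>A. g j * cnj (g j)) = of_real (\<Sum>j\<in>A. (cmod (g j))\<^sup>2)"
  unfolding of_real_sum complex_norm_square ..

lemma sum_mult_cnj_self_eq_0:
  assumes "finite A" "(\<Sum>j\<in>A. g j * cnj (g j)) = 0" "j \<in> A"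
  shows "g j = 0"
proof -
  have "(\<Sum>j\<in>A. (cmod (g j))\<^sup>2) = 0"
    using assms(2) unfolding sum_mult_cnj_self of_real_eq_0_iff .
  then show ?thesis using assms(1,3) by (simp add: sum_nonneg_eq_0_iff)
qed

lemma sum_lessThan_add: "(\<Sum>k<(m::nat) + n. f k) = (\<Sum>k<m. f k) + (\<Sum>k<n. f (m + k))"
  by (induction n) (auto simp: add.assoc)

lemma sum_lessThan_mult: "(\<Sum>i<(a::nat) * b. g i) = (\<Sum>i<a. \<Sum>j<b. g (i * b + j))"
  by (induction a) (simp_all add: add.commute[of b] sum_lessThan_add)

lemma sum_tidx3:
  "(\<Sum>i<(n1::nat) * n2 * n3. g i) = (\<Sum>i1<n1. \<Sum>i2<n2. \<Sum>i3<n3. g (tidx3 n2 n3 i1 i2 i3))"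
  by (simp add: sum_lessThan_mult tidx3_def)

lemma mult_add_less: "i < n \<Longrightarrow> j < (m::nat) \<Longrightarrow> i * m + j < n * m"
proof -
  assume "i < n" "j < m"
  then have "i * m + j < (i + 1) * m" by simp
  also have "\<dots> \<le> n * m" using \<open>i < n\<close> by (intro mult_right_mono) auto
  finally show ?thesis .
qed

lemma tidx3_less: "i1 < n1 \<Longrightarrow> i2 < n2 \<Longrightarrow> i3 < n3 \<Longrightarrow> tidx3 n2 n3 i1 i2 i3 < n1 * n2 * n3"
  by (simp add: tidx3_def mult_add_less)

lemma tidx3_eq_iff:
  assumes "i2 < n2" "i3 < n3" "j2 < n2" "j3 < n3"
  shows "tidx3 n2 n3 i1 i2 i3 = tidx3 n2 n3 j1 j2 j3 \<longleftrightarrow> i1 = j1 \<and> i2 = j2 \<and> i3 = j3"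
proof -
  have "(i * n + j) div n = i \<and> (i * n + j) mod n = j" if "j < n" for i j n :: nat
    using that by simp
  with assms show ?thesis unfolding tidx3_def by metis
qed

lemma index_mult_mat_sum:
  "A \<in> carrier_mat n m \<Longrightarrow> B \<in> carrier_mat m l \<Longrightarrow> i < n \<Longrightarrow> j < l \<Longrightarrow>
   (A * B) $$ (i,j) = (\<Sum>k<m. A $$ (i,k) * B $$ (k,j))"
  by (simp add: scalar_prod_def lessThan_atLeast0)

lemma adj_dims [simp]: "dim_row (adj A) = dim_col A" "dim_col (adj A) = dim_row A"
  by (simp_all add: adj_def)

lemma adj_carrier [simp]: "A \<in> carrier_mat n m \<Longrightarrow> adj A \<in> carrier_mat m n"
  by (simp add: adj_def)

lemma index_adj [simp]: "A \<in> carrier_mat n m \<Longrightarrow> i < m \<Longrightarrow> j < n \<Longrightarrow> adj A $$ (i,j) = cnj (A $$ (j,i))"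
  by (simp add: adj_def)

lemma index_mult_adj:
  "A \<in> carrier_mat n m \<Longrightarrow> B \<in> carrier_mat l m \<Longrightarrow> i < n \<Longrightarrow> j < l \<Longrightarrow>
   (A * adj B) $$ (i,j) = (\<Sum>k<m. A $$ (i,k) * cnj (B $$ (j,k)))"
  by (subst index_mult_mat_sum[where m = m]) auto

lemma index_adj_mult:
  "A \<in> carrier_mat n m \<Longrightarrow> B \<in> carrier_mat n l \<Longrightarrow> i < m \<Longrightarrow> j < l \<Longrightarrow>
   (adj A * B) $$ (i,j) = (\<Sum>k<n. cnj (A $$ (k,i)) * B $$ (k,j))"
  by (subst index_mult_mat_sum[where m = n]) auto

lemma isometry_mat_cols:
  assumes "isometry_mat n m J" "i < m" "j < m"
  shows "(\<Sum>k<n. J $$ (k,i) * cnj (J $$ (k,j))) = kd i j"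
proof -
  have J: "J \<in> carrier_mat n m" and JJ: "adj J * J = 1\<^sub>m m"
    using assms(1) by (auto simp: isometry_mat_def)
  have "(\<Sum>k<n. cnj (J $$ (k,j)) * J $$ (k,i)) = (adj J * J) $$ (j,i)"
    using index_adj_mult[OF J J assms(3,2)] ..
  also have "\<dots> = kd i j"
    using assms(2,3) by (simp add: JJ kd_def)
  finally show ?thesis by (simp add: mult.commute)
qed

lemma unitary_mat_rows:
  assumes "unitary_mat n A" "i < n" "j < n"
  shows "(\<Sum>k<n. A $$ (i,k) * cnj (A $$ (j,k))) = kd i j"
proof -
  have A: "A \<in> carrier_mat n n" and AA: "A * adj A = 1\<^sub>m n"
    using assms(1) by (auto simp: unitary_mat_def)
  have "(\<Sum>k<n. A $$ (i,k) * cnj (A $$ (j,k))) = (A * adj A) $$ (i,j)"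
    using index_mult_adj[OF A A assms(2,3)] ..
  also have "\<dots> = kd i j"
    using assms(2,3) by (simp add: AA kd_def)
  finally show ?thesis .
qed

lemma unitary_mat_cols:
  "unitary_mat n A \<Longrightarrow> i < n \<Longrightarrow> j < n \<Longrightarrow> (\<Sum>k<n. A $$ (k,i) * cnj (A $$ (k,j))) = kd i j"
  by (rule isometry_mat_cols) (auto simp: unitary_mat_def isometry_mat_def)

lemma unitary_matI_rows:
  assumes rows: "\<And>i j. i < n \<Longrightarrow> j < n \<Longrightarrow> (\<Sum>k<n. g i k * cnj (g j k)) = kd i j"
  shows "unitary_mat n (mat n n (\<lambda>(i,j). g i j))"
proof -
  define A where "A = mat n n (\<lambda>(i,j). g i j)"
  have A: "A \<in> carrier_mat n n" by (simp add: A_def)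
  have "A * adj A = 1\<^sub>m n"
  proof (rule eq_matI)
    fix i j assume ij: "i < dim_row (1\<^sub>m n :: complex mat)" "j < dim_col (1\<^sub>m n :: complex mat)"
    then have "(A * adj A) $$ (i,j) = (\<Sum>k<n. A $$ (i,k) * cnj (A $$ (j,k)))"
      by (intro index_mult_adj[OF A A]) auto
    also have "\<dots> = (\<Sum>k<n. g i k * cnj (g j k))"
      using ij by (simp add: A_def)
    finally show "(A * adj A) $$ (i,j) = 1\<^sub>m n $$ (i,j)"
      using ij rows[of i j] by (simp add: kd_def)
  qed (use A in auto)
  moreover from mat_mult_left_right_inverse[OF A _ this] A have "adj A * A = 1\<^sub>m n"
    by simp
  ultimately show ?thesis using A by (simp add: unitary_mat_def A_def)
qed

lemma isometry_mat_square_unitary: "isometry_mat n n J \<Longrightarrow> unitary_mat n J"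
  using mat_mult_left_right_inverse[of "adj J" n J] by (auto simp: isometry_mat_def unitary_mat_def)

section \<open>Orthonormal families and tight frames\<close>

lemma orthonormal_family_card_le:
  fixes v :: "nat \<Rightarrow> nat \<Rightarrow> complex"
  assumes orth: "\<And>i i'. i < n \<Longrightarrow> i' < n \<Longrightarrow> (\<Sum>j<m. v i j * cnj (v i' j)) = kd i i'"
  shows "n \<le> m"
proof (rule ccontr)
  assume "\<not> n \<le> m"
  define g where "g i j = (if j < m then v i j else 0)" for i j
  have "(\<Sum>k<n. g i k * cnj (g j k)) = kd i j" if "i < n" "j < n" for i j
  proof -
    have "(\<Sum>k<n. g i k * cnj (g j k)) = (\<Sum>k<m. v i k * cnj (v j k))"
      using \<open>\<not> n \<le> m\<close> by (intro sum.mono_neutral_cong_right) (auto simp: g_def)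
    then show ?thesis using orth that by simp
  qed
  then have "unitary_mat n (mat n n (\<lambda>(i,j). g i j))"
    by (rule unitary_matI_rows)
  \<comment> \<open>the zero-padded column \<open>m\<close> of this unitary matrix would have norm 1\<close>
  from unitary_mat_cols[OF this, of m m] \<open>\<not> n \<le> m\<close> show False
    by (simp add: g_def)
qed

lemma orthogonal_orthonormal_families_card_le:
  fixes u v :: "nat \<Rightarrow> nat \<Rightarrow> complex"
  assumes u: "\<And>b b'. b < k \<Longrightarrow> b' < k \<Longrightarrow> (\<Sum>j<m. u b j * cnj (u b' j)) = kd b b'"
    and v: "\<And>b b'. b < l \<Longrightarrow> b' < l \<Longrightarrow> (\<Sum>j<m. v b j * cnj (v b' j)) = kd b b'"
    and uv: "\<And>b b'. b < k \<Longrightarrow> b' < l \<Longrightarrow> (\<Sum>j<m. u b j * cnj (v b' j)) = 0"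
  shows "k + l \<le> m"
proof (rule orthonormal_family_card_le)
  define w where "w i = (if i < k then u i else v (i - k))" for i
  fix i i' assume i: "i < k + l" "i' < k + l"
  consider "i < k" "i' < k" | "i < k" "\<not> i' < k" | "\<not> i < k" "i' < k" | "\<not> i < k" "\<not> i' < k"
    by blast
  then show "(\<Sum>j<m. w i j * cnj (w i' j)) = kd i i'"
  proof cases
    case 1
    then show ?thesis by (simp add: w_def u)
  next
    case 2
    then show ?thesis using i uv[of i "i' - k"] by (simp add: w_def)
  next
    case 3
    have "(\<Sum>j<m. v (i - k) j * cnj (u i' j)) = cnj (\<Sum>j<m. u i' j * cnj (v (i - k) j))"
      by (simp add: cnj_sum mult.commute)
    then show ?thesis using 3 i uv[of i' "i - k"] by (simp add: w_def)
  next
    case 4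
    then have "kd (i - k) (i' - k) = kd i i'" by (auto simp: kd_def)
    then show ?thesis using 4 i v[of "i - k" "i' - k"] by (simp add: w_def)
  qed
qed

text \<open>A family \<open>g\<close> with the inner products of \<open>\<alpha> u\<close> differs from it by a family orthogonal
  to \<open>u\<close> of the same shape; if that difference were nonzero, \<open>u\<close> could be doubled to an
  orthonormal family of size \<open>2 k\<close>.\<close>

lemma scaled_orthonormal_family_unique:
  fixes u g :: "nat \<Rightarrow> nat \<Rightarrow> complex"
  assumes u: "\<And>b b'. b < k \<Longrightarrow> b' < k \<Longrightarrow> (\<Sum>j<m. u b j * cnj (u b' j)) = kd b b'"
    and gu: "\<And>b b'. b < k \<Longrightarrow> b' < k \<Longrightarrow> (\<Sum>j<m. g b j * cnj (u b' j)) = kd b b' * \<alpha>"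
    and gg: "\<And>b b'. b < k \<Longrightarrow> b' < k \<Longrightarrow> (\<Sum>j<m. g b j * cnj (g b' j)) = kd b b' * \<beta>"
    and m: "m < 2 * k" and b: "b < k" and j: "j < m"
  shows "g b j = \<alpha> * u b j"
proof (rule ccontr)
  assume ne: "g b j \<noteq> \<alpha> * u b j"
  define h where "h b j = g b j - \<alpha> * u b j" for b j
  have hu: "(\<Sum>j<m. h b j * cnj (u b' j)) = 0" if "b < k" "b' < k" for b b'
    using that by (simp add: h_def algebra_simps sum_subtractf sum_distrib_left[symmetric] gu u)
  have ug: "(\<Sum>j<m. u b j * cnj (g b' j)) = kd b b' * cnj \<alpha>" if "b < k" "b' < k" for b b'
  proof -
    have "(\<Sum>j<m. u b j * cnj (g b' j)) = cnj (\<Sum>j<m. g b' j * cnj (u b j))"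
      by (simp add: cnj_sum mult.commute)
    then show ?thesis using that by (simp add: gu kd_commute)
  qed
  have hh: "(\<Sum>j<m. h b j * cnj (h b' j)) = kd b b' * (\<beta> - \<alpha> * cnj \<alpha>)" if "b < k" "b' < k" for b b'
  proof -
    have "(\<Sum>j<m. h b j * cnj (h b' j)) = (\<Sum>j<m. g b j * cnj (g b' j))
        - cnj \<alpha> * (\<Sum>j<m. g b j * cnj (u b' j)) - \<alpha> * (\<Sum>j<m. u b j * cnj (g b' j))
        + \<alpha> * cnj \<alpha> * (\<Sum>j<m. u b j * cnj (u b' j))"
      by (simp add: h_def sum_subtractf sum.distrib sum_distrib_left algebra_simps)
    then show ?thesis using that by (simp add: gg gu ug u algebra_simps)
  qed
  define \<kappa> where "\<kappa> = (\<Sum>j<m. (cmod (h b j))\<^sup>2)"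
  have \<kappa>: "\<beta> - \<alpha> * cnj \<alpha> = of_real \<kappa>"
    using hh[OF b b] by (simp add: \<kappa>_def sum_mult_cnj_self)
  have "0 < (cmod (h b j))\<^sup>2" using ne by (simp add: h_def)
  also have "\<dots> \<le> \<kappa>" unfolding \<kappa>_def using j by (intro member_le_sum) auto
  finally have "0 < \<kappa>" .
  define v where "v b j = h b j / of_real (sqrt \<kappa>)" for b j
  have "k + k \<le> m"
  proof (rule orthogonal_orthonormal_families_card_le[OF u])
    fix b b' assume "b < k" "b' < k"
    then show "(\<Sum>j<m. v b j * cnj (v b' j)) = kd b b'"
      using hh[of b b'] \<kappa> \<open>0 < \<kappa>\<close>
      by (simp add: v_def sum_divide_distrib[symmetric] flip: of_real_mult)
    show "(\<Sum>j<m. u b j * cnj (v b' j)) = 0"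
    proof -
      have "(\<Sum>j<m. u b j * cnj (v b' j)) = cnj (\<Sum>j<m. h b' j * cnj (u b j)) / of_real (sqrt \<kappa>)"
        by (simp add: v_def cnj_sum sum_divide_distrib mult.commute)
      then show ?thesis using hu \<open>b < k\<close> \<open>b' < k\<close> by simp
    qed
  qed
  then show False using m by simp
qed

text \<open>\<open>\<Sum>\<^sub>b |u\<^sub>b\<rangle>\<langle>u\<^sub>b|\<close> is a projection, so it can only be a nonzero multiple of the identity
  if it is the identity, and then its trace gives \<open>m = k\<close>.\<close>

lemma orthonormal_family_tight_is_basis:
  fixes u :: "nat \<Rightarrow> nat \<Rightarrow> complex"
  assumes u: "\<And>b b'. b < k \<Longrightarrow> b' < k \<Longrightarrow> (\<Sum>j<m. u b j * cnj (u b' j)) = kd b b'"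
    and tight: "\<And>j j'. j < m \<Longrightarrow> j' < m \<Longrightarrow> (\<Sum>b<k. u b j * cnj (u b j')) = c * kd j j'"
    and "c \<noteq> 0" "0 < m"
  shows "c = 1 \<and> m = k"
proof -
  define Q where "Q j j' = (\<Sum>b<k. u b j * cnj (u b j'))" for j j'
  have "(\<Sum>j'<m. Q j j' * Q j' j'') = Q j j''" for j j''
  proof -
    have "(\<Sum>j'<m. Q j j' * Q j' j'') =
        (\<Sum>j'<m. \<Sum>b<k. \<Sum>b'<k. u b j * cnj (u b' j'') * (u b' j' * cnj (u b j')))"
      unfolding Q_def sum_product by (intro sum.cong refl) (simp add: mult_ac)
    also have "\<dots> = (\<Sum>b<k. \<Sum>b'<k. u b j * cnj (u b' j'') * (\<Sum>j'<m. u b' j' * cnj (u b j')))"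
      by (simp only: sum_distrib_left sum.swap[of _ "{..<m}"])
    also have "\<dots> = Q j j''" by (simp add: u Q_def)
    finally show ?thesis .
  qed
  from this[of 0 0] have "c * c = c"
    using \<open>0 < m\<close> by (simp add: Q_def tight kd_def if_distrib cong: if_cong)
  then have "c = 1" using \<open>c \<noteq> 0\<close> by simp
  have "of_nat m = (\<Sum>j<m. Q j j)" by (simp add: Q_def tight \<open>c = 1\<close>)
  also have "\<dots> = (\<Sum>b<k. \<Sum>j<m. u b j * cnj (u b j))" unfolding Q_def by (rule sum.swap)
  also have "\<dots> = of_nat k" by (simp add: u)
  finally show ?thesis using \<open>c = 1\<close> by simp
qed

text \<open>The vectors \<open>G b r \<in> \<complex>\<^sup>m\<close> span \<open>k\<close> mutually orthogonal subspaces with a common Gram matrix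
  \<open>R\<close> and form a tight frame. As \<open>m < 2 k\<close>, each subspace is a line \<open>\<complex> u\<^sub>b\<close>, and tightness
  makes the \<open>u\<^sub>b\<close> an orthonormal basis.\<close>

lemma orthogonal_tight_family_factors:
  fixes G :: "nat \<Rightarrow> 'r \<Rightarrow> nat \<Rightarrow> complex" and R :: "'r \<Rightarrow> 'r \<Rightarrow> complex" and c :: real
  assumes fin: "finite Rw"
    and gram: "\<And>b b' r r'. b < k \<Longrightarrow> b' < k \<Longrightarrow> r \<in> Rw \<Longrightarrow> r' \<in> Rw \<Longrightarrow>
      (\<Sum>j<m. G b r j * cnj (G b' r' j)) = kd b b' * R r r'"
    and tight: "\<And>j j'. j < m \<Longrightarrow> j' < m \<Longrightarrow>
      (\<Sum>r\<in>Rw. \<Sum>b<k. G b r j * cnj (G b r j')) = of_real c * kd j j'"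
    and "0 < c" "0 < m" "m < 2 * k"
  shows "m = k \<and> (\<exists>w V. unitary_mat m V \<and> (\<forall>b<k. \<forall>r\<in>Rw. \<forall>j<m. G b r j = w r * V $$ (j,b)))"
proof -
  have "0 < k" using \<open>0 < m\<close> \<open>m < 2 * k\<close> by simp
  have "\<exists>r0\<in>Rw. R r0 r0 \<noteq> 0"
  proof (rule ccontr)
    assume "\<not> (\<exists>r0\<in>Rw. R r0 r0 \<noteq> 0)"
    then have "G b r j = 0" if "b < k" "r \<in> Rw" "j < m" for b r j
      using that gram[of b b r r] by (intro sum_mult_cnj_self_eq_0[of "{..<m}" "G b r"]) auto
    then show False using tight[of 0 0] \<open>0 < m\<close> \<open>0 < c\<close> by simp
  qed
  then obtain r0 where r0: "r0 \<in> Rw" "R r0 r0 \<noteq> 0" ..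
  define N where "N = (\<Sum>j<m. (cmod (G 0 r0 j))\<^sup>2)"
  have N: "R r0 r0 = of_real N"
    using gram[of 0 0 r0 r0] \<open>0 < k\<close> r0 by (simp add: N_def sum_mult_cnj_self)
  have "0 < N" using N r0 unfolding N_def by (metis less_eq_real_def of_real_0 sum_nonneg zero_le_power2)
  define s where "s = sqrt N"
  have ss: "of_real s * of_real s = (of_real N :: complex)" using \<open>0 < N\<close> by (simp add: s_def flip: of_real_mult)
  define u where "u b j = G b r0 j / of_real s" for b j
  define w where "w r = R r r0 / of_real s" for r
  have u: "(\<Sum>j<m. u b j * cnj (u b' j)) = kd b b'" if "b < k" "b' < k" for b b'
    using gram[of b b' r0 r0] that r0 ss N \<open>0 < N\<close>
    by (simp add: u_def sum_divide_distrib[symmetric])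
  have G_eq: "G b r j = w r * u b j" if "b < k" "r \<in> Rw" "j < m" for b r j
  proof (rule scaled_orthonormal_family_unique[where g = "\<lambda>b. G b r"])
    fix b b' assume "b < k" "b' < k"
    then show "(\<Sum>j<m. G b r j * cnj (u b' j)) = kd b b' * w r"
      using gram[of b b' r r0] \<open>r \<in> Rw\<close> r0 by (simp add: u_def w_def sum_divide_distrib[symmetric])
    show "(\<Sum>j<m. G b r j * cnj (G b' r j)) = kd b b' * R r r"
      using gram \<open>b < k\<close> \<open>b' < k\<close> \<open>r \<in> Rw\<close> by simp
  qed (use that u \<open>m < 2 * k\<close> in auto)
  define W where "W = (\<Sum>r\<in>Rw. (cmod (w r))\<^sup>2)"
  have W: "of_real W * (\<Sum>b<k. u b j * cnj (u b j')) = of_real c * kd j j'" if "j < m" "j' < m" for j j'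
  proof -
    have "(\<Sum>r\<in>Rw. \<Sum>b<k. G b r j * cnj (G b r j')) =
        (\<Sum>r\<in>Rw. \<Sum>b<k. (w r * cnj (w r)) * (u b j * cnj (u b j')))"
      using that by (intro sum.cong refl) (simp add: G_eq mult_ac)
    also have "\<dots> = (\<Sum>r\<in>Rw. w r * cnj (w r)) * (\<Sum>b<k. u b j * cnj (u b j'))"
      by (rule sum_product[symmetric])
    finally have "(\<Sum>r\<in>Rw. \<Sum>b<k. G b r j * cnj (G b r j')) =
        (\<Sum>r\<in>Rw. w r * cnj (w r)) * (\<Sum>b<k. u b j * cnj (u b j'))" .
    then show ?thesis using tight[OF that] by (simp add: W_def sum_mult_cnj_self)
  qed
  have "W \<noteq> 0" using W[of 0 0] \<open>0 < m\<close> \<open>0 < c\<close> by auto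
  have "complex_of_real (c / W) = 1 \<and> m = k"
  proof (rule orthonormal_family_tight_is_basis[OF u])
    show "(\<Sum>b<k. u b j * cnj (u b j')) = complex_of_real (c / W) * kd j j'" if "j < m" "j' < m" for j j'
      using W[OF that] \<open>W \<noteq> 0\<close> by (simp add: field_simps)
  qed (use \<open>0 < c\<close> \<open>W \<noteq> 0\<close> \<open>0 < m\<close> in auto)
  then have "m = k" and "c = W" using \<open>W \<noteq> 0\<close> by auto
  have basis: "(\<Sum>b<k. u b j * cnj (u b j')) = kd j j'" if "j < m" "j' < m" for j j'
    using W[OF that] \<open>c = W\<close> \<open>W \<noteq> 0\<close> by simp
  have "unitary_mat m (mat m m (\<lambda>(j,b). u b j))"
    by (rule unitary_matI_rows) (simp add: basis \<open>m = k\<close>)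
  with G_eq \<open>m = k\<close> show ?thesis by force
qed

section \<open>Pure combs in entry form\<close>

text \<open>An operator \<open>P \<otimes> A\<^sub>O \<otimes> B\<^sub>O \<rightarrow> A\<^sub>I \<otimes> B\<^sub>I \<otimes> F\<close> is handled through its entries
  \<open>T a\<^sub>I b\<^sub>I f p a\<^sub>O b\<^sub>O\<close>, in the argument order of \<^const>\<open>opent\<close>.\<close>

type_synonym entry_fun = "nat \<Rightarrow> nat \<Rightarrow> nat \<Rightarrow> nat \<Rightarrow> nat \<Rightarrow> nat \<Rightarrow> complex"

definition orthonormal_rows :: "nat \<Rightarrow> nat \<Rightarrow> entry_fun \<Rightarrow> bool" where
  "orthonormal_rows p d T \<longleftrightarrow>
     (\<forall>x<d. \<forall>y<d. \<forall>f<p. \<forall>x'<d. \<forall>y'<d. \<forall>f'<p.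
        (\<Sum>q<p. \<Sum>a<d. \<Sum>b<d. T x y f q a b * cnj (T x' y' f' q a b)) = kd x x' * kd y y' * kd f f')"

lemma orthonormal_rowsD:
  "orthonormal_rows p d T \<Longrightarrow> x < d \<Longrightarrow> y < d \<Longrightarrow> f < p \<Longrightarrow> x' < d \<Longrightarrow> y' < d \<Longrightarrow> f' < p \<Longrightarrow>
   (\<Sum>q<p. \<Sum>a<d. \<Sum>b<d. T x y f q a b * cnj (T x' y' f' q a b)) = kd x x' * kd y y' * kd f f'"
  by (simp add: orthonormal_rows_def)

definition comb_AB_entries :: "nat \<Rightarrow> nat \<Rightarrow> entry_fun \<Rightarrow> bool" where
  "comb_AB_entries p d T \<longleftrightarrow>
   (\<exists>R2 :: (nat \<times> nat \<times> nat \<times> nat) \<Rightarrow> (nat \<times> nat \<times> nat \<times> nat) \<Rightarrow> complex.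
    \<exists>R1 :: (nat \<times> nat) \<Rightarrow> (nat \<times> nat) \<Rightarrow> complex.
     (\<forall>q<p. \<forall>a<d. \<forall>b<d. \<forall>x<d. \<forall>y<d. \<forall>q'<p. \<forall>a'<d. \<forall>b'<d. \<forall>x'<d. \<forall>y'<d.
        (\<Sum>f<p. T x y f q a b * cnj (T x' y' f q' a' b')) = kd b b' * R2 (q,a,x,y) (q',a',x',y')) \<and>
     (\<forall>q<p. \<forall>a<d. \<forall>x<d. \<forall>q'<p. \<forall>a'<d. \<forall>x'<d.
        (\<Sum>y<d. R2 (q,a,x,y) (q',a',x',y)) = kd a a' * R1 (q,x) (q',x')) \<and>
     (\<forall>q<p. \<forall>q'<p. (\<Sum>x<d. R1 (q,x) (q',x)) = kd q q'))"

lemma comb_AB_entriesI: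
  assumes "\<And>q a b x y q' a' b' x' y'. q < p \<Longrightarrow> a < d \<Longrightarrow> b < d \<Longrightarrow> x < d \<Longrightarrow> y < d \<Longrightarrow>
      q' < p \<Longrightarrow> a' < d \<Longrightarrow> b' < d \<Longrightarrow> x' < d \<Longrightarrow> y' < d \<Longrightarrow>
      (\<Sum>f<p. T x y f q a b * cnj (T x' y' f q' a' b')) = kd b b' * R2 (q,a,x,y) (q',a',x',y')"
    and "\<And>q a x q' a' x'. q < p \<Longrightarrow> a < d \<Longrightarrow> x < d \<Longrightarrow> q' < p \<Longrightarrow> a' < d \<Longrightarrow> x' < d \<Longrightarrow>
      (\<Sum>y<d. R2 (q,a,x,y) (q',a',x',y)) = kd a a' * R1 (q,x) (q',x')"
    and "\<And>q q'. q < p \<Longrightarrow> q' < p \<Longrightarrow> (\<Sum>x<d. R1 (q,x) (q',x)) = kd q q'"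
  shows "comb_AB_entries p d T"
  unfolding comb_AB_entries_def
  by (intro exI[of _ R2] exI[of _ R1] conjI allI impI) (simp_all add: assms)

lemma comb_AB_entriesE:
  assumes "comb_AB_entries p d T"
  obtains R2 R1 where
    "\<And>q a b x y q' a' b' x' y'. q < p \<Longrightarrow> a < d \<Longrightarrow> b < d \<Longrightarrow> x < d \<Longrightarrow> y < d \<Longrightarrow>
      q' < p \<Longrightarrow> a' < d \<Longrightarrow> b' < d \<Longrightarrow> x' < d \<Longrightarrow> y' < d \<Longrightarrow>
      (\<Sum>f<p. T x y f q a b * cnj (T x' y' f q' a' b')) = kd b b' * R2 (q,a,x,y) (q',a',x',y')"
    and "\<And>q a x q' a' x'. q < p \<Longrightarrow> a < d \<Longrightarrow> x < d \<Longrightarrow> q' < p \<Longrightarrow> a' < d \<Longrightarrow> x' < d \<Longrightarrow>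
      (\<Sum>y<d. R2 (q,a,x,y) (q',a',x',y)) = kd a a' * R1 (q,x) (q',x')"
    and "\<And>q q'. q < p \<Longrightarrow> q' < p \<Longrightarrow> (\<Sum>x<d. R1 (q,x) (q',x)) = kd q q'"
  using assms unfolding comb_AB_entries_def
  apply (elim exE conjE)
  subgoal for R2 R1 by (rule that[of R2 R1]) simp_all
  done

definition swap_slots :: "entry_fun \<Rightarrow> entry_fun" where
  "swap_slots T = (\<lambda>x y f q a b. T y x f q b a)"

lemma comb_AB_iff: "comb_AB p d d d d p V \<longleftrightarrow> comb_AB_entries p d (opent d d p d d V)"
  unfolding comb_AB_def comb_AB_entries_def choi_def by simp

lemma comb_BA_iff: "comb_BA p d d d d p V \<longleftrightarrow> comb_AB_entries p d (swap_slots (opent d d p d d V))"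
proof
  assume "comb_BA p d d d d p V"
  then show "comb_AB_entries p d (swap_slots (opent d d p d d V))"
    unfolding comb_BA_def
    apply (elim exE conjE)
    subgoal for R2 R1
      by (rule comb_AB_entriesI[of p d _ "\<lambda>(q,a,x,y) (q',a',x',y'). R2 (q,a,y,x) (q',a',y',x')" R1])
        (simp_all add: swap_slots_def choi_def)
    done
next
  assume "comb_AB_entries p d (swap_slots (opent d d p d d V))"
  then show "comb_BA p d d d d p V"
    apply (elim comb_AB_entriesE)
    subgoal for R2 R1
      unfolding comb_BA_def
      by (intro exI[of _ "\<lambda>(q,a,x,y) (q',a',x',y'). R2 (q,a,y,x) (q',a',y',x')"] exI[of _ R1]
          conjI allI impI) (simp_all add: swap_slots_def choi_def)
    done
qed

lemma orthonormal_rows_opent: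
  assumes V: "V \<in> carrier_mat (d*d*p) (p*d*d)" and "unitary_mat (p*d*d) V"
  shows "orthonormal_rows p d (opent d d p d d V)"
  unfolding orthonormal_rows_def
proof (intro allI impI)
  fix x y f x' y' f' assume b: "x < d" "y < d" "f < p" "x' < d" "y' < d" "f' < p"
  define i where "i = tidx3 d p x y f"
  define i' where "i' = tidx3 d p x' y' f'"
  have "i < p*d*d" "i' < p*d*d"
    using b tidx3_less[of x d y d f p] tidx3_less[of x' d y' d f' p]
    by (simp_all add: i_def i'_def mult_ac)
  then have "(\<Sum>k<p*d*d. V $$ (i,k) * cnj (V $$ (i',k))) = kd i i'"
    by (rule unitary_mat_rows[OF \<open>unitary_mat (p*d*d) V\<close>])
  also have "kd i i' = kd x x' * kd y y' * kd f f'"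
    using b by (auto simp: kd_def i_def i'_def tidx3_eq_iff)
  finally show "(\<Sum>q<p. \<Sum>a<d. \<Sum>b<d. opent d d p d d V x y f q a b * cnj (opent d d p d d V x' y' f' q a b))
      = kd x x' * kd y y' * kd f f'"
    by (simp add: sum_tidx3 opent_def i_def i'_def)
qed

lemma orthonormal_rows_swap_slots:
  assumes "orthonormal_rows p d T"
  shows "orthonormal_rows p d (swap_slots T)"
  unfolding orthonormal_rows_def
proof (intro allI impI)
  fix x y f x' y' f' assume b: "x < d" "y < d" "f < p" "x' < d" "y' < d" "f' < p"
  have "(\<Sum>q<p. \<Sum>a<d. \<Sum>b<d. T y x f q b a * cnj (T y' x' f' q b a)) =
      (\<Sum>q<p. \<Sum>b<d. \<Sum>a<d. T y x f q b a * cnj (T y' x' f' q b a))"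
    by (rule sum.cong[OF refl], rule sum.swap)
  also have "\<dots> = kd x x' * kd y y' * kd f f'"
    using orthonormal_rowsD[OF assms, of y x f y' x' f'] b by (simp add: mult_ac)
  finally show "(\<Sum>q<p. \<Sum>a<d. \<Sum>b<d. swap_slots T x y f q a b * cnj (swap_slots T x' y' f' q a b))
      = kd x x' * kd y y' * kd f f'"
    by (simp add: swap_slots_def)
qed

lemma comb_AB_entries_split_last:
  assumes rows: "orthonormal_rows p d T" and comb: "comb_AB_entries p d T"
    and "0 < p" "p < 2 * d"
  shows "p = d \<and> (\<exists>w U2. unitary_mat d U2 \<and>
    (\<forall>x<d. \<forall>y<d. \<forall>f<d. \<forall>q<d. \<forall>a<d. \<forall>b<d. T x y f q a b = w (x,y,q,a) * U2 $$ (f,b)))"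
proof -
  obtain R2 R1 where c1: "\<And>q a b x y q' a' b' x' y'. q < p \<Longrightarrow> a < d \<Longrightarrow> b < d \<Longrightarrow> x < d \<Longrightarrow> y < d \<Longrightarrow>
      q' < p \<Longrightarrow> a' < d \<Longrightarrow> b' < d \<Longrightarrow> x' < d \<Longrightarrow> y' < d \<Longrightarrow>
      (\<Sum>f<p. T x y f q a b * cnj (T x' y' f q' a' b')) = kd b b' * R2 (q,a,x,y) (q',a',x',y')"
    using comb by (elim comb_AB_entriesE) (rule that)
  define G where "G b r f = (case r of (x,y,q,a) \<Rightarrow> T x y f q a b)" for b r f
  define Rw where "Rw = {..<d} \<times> {..<d} \<times> {..<p} \<times> {..<d}"
  have "p = d \<and> (\<exists>w V. unitary_mat p V \<and> (\<forall>b<d. \<forall>r\<in>Rw. \<forall>j<p. G b r j = w r * V $$ (j,b)))"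
  proof (rule orthogonal_tight_family_factors[where c = "real (d * d)"
        and R = "\<lambda>(x,y,q,a) (x',y',q',a'). R2 (q,a,x,y) (q',a',x',y')"])
    fix b b' r r' assume "b < d" "b' < d" "r \<in> Rw" "r' \<in> Rw"
    then show "(\<Sum>j<p. G b r j * cnj (G b' r' j)) =
        kd b b' * (\<lambda>(x,y,q,a) (x',y',q',a'). R2 (q,a,x,y) (q',a',x',y')) r r'"
      by (cases r, cases r') (simp add: Rw_def G_def c1)
  next
    fix j j' assume "j < p" "j' < p"
    have "(\<Sum>r\<in>Rw. \<Sum>b<d. G b r j * cnj (G b r j')) =
        (\<Sum>x<d. \<Sum>y<d. \<Sum>q<p. \<Sum>a<d. \<Sum>b<d. T x y j q a b * cnj (T x y j' q a b))"
      by (simp add: Rw_def G_def sum.cartesian_product')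
    also have "\<dots> = (\<Sum>x<d. \<Sum>y<d. kd j j')"
      using \<open>j < p\<close> \<open>j' < p\<close> by (intro sum.cong refl) (simp add: orthonormal_rowsD[OF rows])
    finally show "(\<Sum>r\<in>Rw. \<Sum>b<d. G b r j * cnj (G b r j')) = of_real (real (d * d)) * kd j j'"
      by simp
  qed (use assms in \<open>auto simp: Rw_def\<close>)
  then show ?thesis by (force simp: Rw_def G_def)
qed

lemma comb_AB_entries_split_middle:
  assumes rows: "orthonormal_rows d d T" and comb: "comb_AB_entries d d T" and "0 < d"
    and U2: "unitary_mat d U2"
    and T: "\<And>x y f q a b. x < d \<Longrightarrow> y < d \<Longrightarrow> f < d \<Longrightarrow> q < d \<Longrightarrow> a < d \<Longrightarrow> b < d \<Longrightarrow>
      T x y f q a b = w (x,y,q,a) * U2 $$ (f,b)"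
  shows "\<exists>z U1. unitary_mat d U1 \<and> (\<forall>x<d. \<forall>y<d. \<forall>q<d. \<forall>a<d. w (x,y,q,a) = z (x,q) * U1 $$ (y,a))"
proof -
  obtain R2 R1 where c1: "\<And>q a b x y q' a' b' x' y'. q < d \<Longrightarrow> a < d \<Longrightarrow> b < d \<Longrightarrow> x < d \<Longrightarrow> y < d \<Longrightarrow>
      q' < d \<Longrightarrow> a' < d \<Longrightarrow> b' < d \<Longrightarrow> x' < d \<Longrightarrow> y' < d \<Longrightarrow>
      (\<Sum>f<d. T x y f q a b * cnj (T x' y' f q' a' b')) = kd b b' * R2 (q,a,x,y) (q',a',x',y')"
    and c2: "\<And>q a x q' a' x'. q < d \<Longrightarrow> a < d \<Longrightarrow> x < d \<Longrightarrow> q' < d \<Longrightarrow> a' < d \<Longrightarrow> x' < d \<Longrightarrow>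
      (\<Sum>y<d. R2 (q,a,x,y) (q',a',x',y)) = kd a a' * R1 (q,x) (q',x')"
    using comb by (elim comb_AB_entriesE) (rule that)
  have col0: "(\<Sum>f<d. U2 $$ (f,0) * cnj (U2 $$ (f,0))) = 1"
    using unitary_mat_cols[OF U2, of 0 0] \<open>0 < d\<close> by simp
  have row0: "(\<Sum>b<d. U2 $$ (0,b) * cnj (U2 $$ (0,b))) = 1"
    using unitary_mat_rows[OF U2, of 0 0] \<open>0 < d\<close> by simp
  have R2_eq: "R2 (q,a,x,y) (q',a',x',y') = w (x,y,q,a) * cnj (w (x',y',q',a'))"
    if "q < d" "a < d" "x < d" "y < d" "q' < d" "a' < d" "x' < d" "y' < d" for q a x y q' a' x' y'
  proof -
    have "R2 (q,a,x,y) (q',a',x',y') = (\<Sum>f<d. T x y f q a 0 * cnj (T x' y' f q' a' 0))"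
      using c1[of q a 0 x y q' a' 0 x' y'] that \<open>0 < d\<close> by simp
    also have "\<dots> = (\<Sum>f<d. w (x,y,q,a) * cnj (w (x',y',q',a')) * (U2 $$ (f,0) * cnj (U2 $$ (f,0))))"
      using that \<open>0 < d\<close> by (intro sum.cong refl) (simp add: T mult_ac)
    finally show ?thesis by (simp add: col0 flip: sum_distrib_left)
  qed
  have w_rows: "(\<Sum>q<d. \<Sum>a<d. w (x,y,q,a) * cnj (w (x,y',q,a))) = kd y y'"
    if "x < d" "y < d" "y' < d" for x y y'
  proof -
    have "kd y y' = (\<Sum>q<d. \<Sum>a<d. \<Sum>b<d. T x y 0 q a b * cnj (T x y' 0 q a b))"
      using orthonormal_rowsD[OF rows, of x y 0 x y' 0] that \<open>0 < d\<close> by simp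
    also have "\<dots> = (\<Sum>q<d. \<Sum>a<d. \<Sum>b<d. w (x,y,q,a) * cnj (w (x,y',q,a)) * (U2 $$ (0,b) * cnj (U2 $$ (0,b))))"
      using that \<open>0 < d\<close> by (intro sum.cong refl) (simp add: T mult_ac)
    finally show ?thesis by (simp add: row0 flip: sum_distrib_left)
  qed
  define G where "G a r y = (case r of (x,q) \<Rightarrow> w (x,y,q,a))" for a r y
  have "d = d \<and> (\<exists>z V. unitary_mat d V \<and> (\<forall>a<d. \<forall>r\<in>{..<d} \<times> {..<d}. \<forall>y<d. G a r y = z r * V $$ (y,a)))"
  proof (rule orthogonal_tight_family_factors[where c = "real d" and R = "\<lambda>(x,q) (x',q'). R1 (q,x) (q',x')"])
    fix a a' r r' assume a: "a < d" "a' < d" and r: "r \<in> {..<d} \<times> {..<d}" "r' \<in> {..<d} \<times> {..<d}"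
    obtain x q x' q' where xq: "r = (x,q)" "r' = (x',q')" by (cases r, cases r') auto
    have "(\<Sum>y<d. G a r y * cnj (G a' r' y)) = (\<Sum>y<d. R2 (q,a,x,y) (q',a',x',y))"
      using a r by (intro sum.cong refl) (simp add: G_def xq R2_eq)
    then show "(\<Sum>y<d. G a r y * cnj (G a' r' y)) = kd a a' * (\<lambda>(x,q) (x',q'). R1 (q,x) (q',x')) r r'"
      using a r by (simp add: xq c2)
  next
    fix j j' assume "j < d" "j' < d"
    have "(\<Sum>r\<in>{..<d} \<times> {..<d}. \<Sum>a<d. G a r j * cnj (G a r j')) =
        (\<Sum>x<d. \<Sum>q<d. \<Sum>a<d. w (x,j,q,a) * cnj (w (x,j',q,a)))"
      by (simp add: G_def sum.cartesian_product')
    also have "\<dots> = (\<Sum>x<d. kd j j')"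
      using \<open>j < d\<close> \<open>j' < d\<close> by (intro sum.cong refl) (simp add: w_rows)
    finally show "(\<Sum>r\<in>{..<d} \<times> {..<d}. \<Sum>a<d. G a r j * cnj (G a r j')) = of_real (real d) * kd j j'"
      by simp
  qed (use \<open>0 < d\<close> in auto)
  then show ?thesis by (force simp: G_def)
qed

definition unitary_product_form :: "nat \<Rightarrow> entry_fun \<Rightarrow> bool" where
  "unitary_product_form d T \<longleftrightarrow> (\<exists>U0 U1 U2. unitary_mat d U0 \<and> unitary_mat d U1 \<and> unitary_mat d U2 \<and>
     (\<forall>x<d. \<forall>y<d. \<forall>f<d. \<forall>q<d. \<forall>a<d. \<forall>b<d. T x y f q a b = U0 $$ (x,q) * U1 $$ (y,a) * U2 $$ (f,b)))"

lemma unitary_product_form_swap_slotsD: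
  assumes "unitary_product_form d (swap_slots T)"
  shows "\<exists>V0 V1 V2. unitary_mat d V0 \<and> unitary_mat d V1 \<and> unitary_mat d V2 \<and>
    (\<forall>ai<d. \<forall>bi<d. \<forall>fi<d. \<forall>p<d. \<forall>ao<d. \<forall>bo<d.
       T ai bi fi p ao bo = V0 $$ (bi,p) * V1 $$ (ai,bo) * V2 $$ (fi,ao))"
proof -
  obtain V0 V1 V2 where "unitary_mat d V0" "unitary_mat d V1" "unitary_mat d V2"
    and V: "\<forall>x<d. \<forall>y<d. \<forall>f<d. \<forall>q<d. \<forall>a<d. \<forall>b<d. T y x f q b a = V0 $$ (x,q) * V1 $$ (y,a) * V2 $$ (f,b)"
    using assms by (auto simp: unitary_product_form_def swap_slots_def)
  moreover have "\<forall>ai<d. \<forall>bi<d. \<forall>fi<d. \<forall>p<d. \<forall>ao<d. \<forall>bo<d.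
      T ai bi fi p ao bo = V0 $$ (bi,p) * V1 $$ (ai,bo) * V2 $$ (fi,ao)"
    using V by simp
  ultimately show ?thesis by blast
qed

lemma comb_AB_entries_product_form:
  assumes rows: "orthonormal_rows p d T" and comb: "comb_AB_entries p d T"
    and "0 < p" "p < 2 * d"
  shows "p = d \<and> unitary_product_form d T"
proof -
  obtain w U2 where "p = d" and U2: "unitary_mat d U2"
    and Tw: "\<forall>x<d. \<forall>y<d. \<forall>f<d. \<forall>q<d. \<forall>a<d. \<forall>b<d. T x y f q a b = w (x,y,q,a) * U2 $$ (f,b)"
    using comb_AB_entries_split_last[OF assms] by blast
  with assms have "0 < d" by simp
  obtain z U1 where U1: "unitary_mat d U1"
    and wz: "\<forall>x<d. \<forall>y<d. \<forall>q<d. \<forall>a<d. w (x,y,q,a) = z (x,q) * U1 $$ (y,a)"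
    using comb_AB_entries_split_middle[of d T U2 w] rows comb \<open>p = d\<close> \<open>0 < d\<close> U2 Tw by auto
  have T: "T x y f q a b = z (x,q) * U1 $$ (y,a) * U2 $$ (f,b)"
    if "x < d" "y < d" "f < d" "q < d" "a < d" "b < d" for x y f q a b
    using Tw wz that by simp
  have z_rows: "(\<Sum>q<d. z (x,q) * cnj (z (x',q))) = kd x x'" if "x < d" "x' < d" for x x'
  proof -
    have "kd x x' = (\<Sum>q<d. \<Sum>a<d. \<Sum>b<d. T x 0 0 q a b * cnj (T x' 0 0 q a b))"
      using orthonormal_rowsD[OF rows, of x 0 0 x' 0 0] that \<open>0 < d\<close> \<open>p = d\<close> by simp
    also have "\<dots> = (\<Sum>q<d. \<Sum>a<d. \<Sum>b<d. z (x,q) * cnj (z (x',q)) *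
        ((U1 $$ (0,a) * cnj (U1 $$ (0,a))) * (U2 $$ (0,b) * cnj (U2 $$ (0,b)))))"
      using that \<open>0 < d\<close> by (intro sum.cong refl) (simp add: T mult_ac)
    also have "\<dots> = (\<Sum>q<d. z (x,q) * cnj (z (x',q)) *
        (\<Sum>a<d. \<Sum>b<d. (U1 $$ (0,a) * cnj (U1 $$ (0,a))) * (U2 $$ (0,b) * cnj (U2 $$ (0,b)))))"
      by (simp only: sum_distrib_left)
    also have "\<dots> = (\<Sum>q<d. z (x,q) * cnj (z (x',q)) *
        ((\<Sum>a<d. U1 $$ (0,a) * cnj (U1 $$ (0,a))) * (\<Sum>b<d. U2 $$ (0,b) * cnj (U2 $$ (0,b)))))"
      by (simp only: sum_product)
    finally show ?thesis
      using unitary_mat_rows[OF U1, of 0 0] unitary_mat_rows[OF U2, of 0 0] \<open>0 < d\<close> by simp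
  qed
  have "unitary_mat d (mat d d z)"
    using unitary_matI_rows[of d "\<lambda>x q. z (x,q)"] by (simp add: z_rows)
  with U1 U2 T \<open>p = d\<close> show ?thesis
    unfolding unitary_product_form_def by (intro conjI exI[of _ "mat d d z"] exI[of _ U1] exI[of _ U2]) auto
qed

section \<open>Direct sums of pure combs\<close>

lemma one_mat_kd: "i < n \<Longrightarrow> j < n \<Longrightarrow> (1\<^sub>m n :: complex mat) $$ (i,j) = kd i j"
  by (simp add: kd_def)

lemma kron_carrier [simp]:
  "A \<in> carrier_mat n m \<Longrightarrow> B \<in> carrier_mat n' m' \<Longrightarrow> kron A B \<in> carrier_mat (n * n') (m * m')"
  by (simp add: kron_def)

lemma index_kron3:
  assumes "A \<in> carrier_mat n1 m1" "B \<in> carrier_mat n2 m2" "C \<in> carrier_mat n3 m3"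
    and "i1 < n1" "i2 < n2" "i3 < n3" "j1 < m1" "j2 < m2" "j3 < m3"
  shows "kron (kron A B) C $$ (tidx3 n2 n3 i1 i2 i3, tidx3 m2 m3 j1 j2 j3) =
    A $$ (i1,j1) * B $$ (i2,j2) * C $$ (i3,j3)"
proof -
  have "i1 * n2 + i2 < n1 * n2" "j1 * m2 + j2 < m1 * m2"
    using assms by (simp_all add: mult_add_less)
  then show ?thesis using assms by (simp add: kron_def tidx3_def mult_add_less)
qed

lemma index_mult_kron_one_one:
  assumes U: "U \<in> carrier_mat n (D*d*d)" and J: "J \<in> carrier_mat D p"
    and "i < n" "q1 < p" "a < d" "b < d"
  shows "(U * kron (kron J (1\<^sub>m d)) (1\<^sub>m d)) $$ (i, tidx3 d d q1 a b) =
    (\<Sum>q<D. U $$ (i, tidx3 d d q a b) * J $$ (q,q1))"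
proof -
  have "(U * kron (kron J (1\<^sub>m d)) (1\<^sub>m d)) $$ (i, tidx3 d d q1 a b) =
      (\<Sum>k<D*d*d. U $$ (i,k) * kron (kron J (1\<^sub>m d)) (1\<^sub>m d) $$ (k, tidx3 d d q1 a b))"
    using assms by (intro index_mult_mat_sum[where l = "p*d*d"]) (auto simp: tidx3_less)
  also have "\<dots> = (\<Sum>q<D. \<Sum>a'<d. \<Sum>b'<d. U $$ (i, tidx3 d d q a' b') * (J $$ (q,q1) * kd a' a * kd b' b))"
    unfolding sum_tidx3 using assms
    by (intro sum.cong refl) (simp add: index_kron3[OF J one_carrier_mat one_carrier_mat] one_mat_kd)
  also have "\<dots> = (\<Sum>q<D. U $$ (i, tidx3 d d q a b) * J $$ (q,q1))"
    using assms by (simp add: mult.assoc[symmetric])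
  finally show ?thesis .
qed

lemma index_kron_one_one_mult:
  assumes K: "K \<in> carrier_mat D f" and W: "W \<in> carrier_mat (d*d*f) m"
    and "x < d" "y < d" "g < D" "j < m"
  shows "(kron (kron (1\<^sub>m d) (1\<^sub>m d)) K * W) $$ (tidx3 d D x y g, j) =
    (\<Sum>f'<f. K $$ (g,f') * W $$ (tidx3 d f x y f', j))"
proof -
  have "(kron (kron (1\<^sub>m d) (1\<^sub>m d)) K * W) $$ (tidx3 d D x y g, j) =
      (\<Sum>k<d*d*f. kron (kron (1\<^sub>m d) (1\<^sub>m d)) K $$ (tidx3 d D x y g, k) * W $$ (k,j))"
    using assms by (intro index_mult_mat_sum[where n = "d*d*D"]) (auto simp: tidx3_less)
  also have "\<dots> = (\<Sum>x'<d. \<Sum>y'<d. \<Sum>f'<f. kd x x' * kd y y' * K $$ (g,f') * W $$ (tidx3 d f x' y' f', j))"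
    unfolding sum_tidx3 using assms
    by (intro sum.cong refl) (simp add: index_kron3[OF one_carrier_mat one_carrier_mat K] one_mat_kd)
  also have "\<dots> = (\<Sum>f'<f. K $$ (g,f') * W $$ (tidx3 d f x y f', j))"
    using assms by (simp add: sum_distrib_left[symmetric] mult.assoc)
  finally show ?thesis .
qed

definition adj_append_cols :: "nat \<Rightarrow> nat \<Rightarrow> complex mat \<Rightarrow> complex mat \<Rightarrow> complex mat" where
  "adj_append_cols D p1 J1 J2 =
     mat D D (\<lambda>(i,j). if i < p1 then cnj (J1 $$ (j,i)) else cnj (J2 $$ (j, i - p1)))"

lemma unitary_adj_append_cols:
  assumes J1: "isometry_mat D p1 J1" and J2: "isometry_mat D p2 J2"
    and orth: "adj J1 * J2 = 0\<^sub>m p1 p2" and D: "p1 + p2 = D"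
  shows "unitary_mat D (adj_append_cols D p1 J1 J2)"
proof -
  have J1c: "J1 \<in> carrier_mat D p1" and J2c: "J2 \<in> carrier_mat D p2"
    and J11: "adj J1 * J1 = 1\<^sub>m p1" and J22: "adj J2 * J2 = 1\<^sub>m p2"
    using J1 J2 by (auto simp: isometry_mat_def)
  have gram11: "(\<Sum>k<D. cnj (J1 $$ (k,i)) * J1 $$ (k,j)) = kd i j" if "i < p1" "j < p1" for i j
    using index_adj_mult[OF J1c J1c that] that by (simp add: J11 kd_def)
  have gram22: "(\<Sum>k<D. cnj (J2 $$ (k,i)) * J2 $$ (k,j)) = kd i j" if "i < p2" "j < p2" for i j
    using index_adj_mult[OF J2c J2c that] that by (simp add: J22 kd_def)
  have gram12: "(\<Sum>k<D. cnj (J1 $$ (k,i)) * J2 $$ (k,j)) = 0" if "i < p1" "j < p2" for i j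
    using index_adj_mult[OF J1c J2c that] that by (simp add: orth)
  have gram21: "(\<Sum>k<D. cnj (J2 $$ (k,i)) * J1 $$ (k,j)) = 0" if "i < p2" "j < p1" for i j
  proof -
    have "(\<Sum>k<D. cnj (J2 $$ (k,i)) * J1 $$ (k,j)) = cnj (\<Sum>k<D. cnj (J1 $$ (k,j)) * J2 $$ (k,i))"
      by (simp add: cnj_sum mult.commute)
    then show ?thesis using gram12[OF that(2,1)] by simp
  qed
  define g where "g i k = (if i < p1 then cnj (J1 $$ (k,i)) else cnj (J2 $$ (k, i - p1)))" for i k
  have "(\<Sum>k<D. g i k * cnj (g j k)) = kd i j" if "i < D" "j < D" for i j
  proof (cases "i < p1"; cases "j < p1")
    assume "\<not> i < p1" "\<not> j < p1"
    moreover from this have "kd (i - p1) (j - p1) = kd i j" by (auto simp: kd_def)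
    ultimately show ?thesis using gram22[of "i - p1" "j - p1"] that D by (simp add: g_def)
  qed (use that D gram11 gram12 gram21 in \<open>simp_all add: g_def\<close>)
  then have "unitary_mat D (mat D D (\<lambda>(i,k). g i k))"
    by (rule unitary_matI_rows)
  then show ?thesis by (simp add: adj_append_cols_def g_def)
qed

lemma complementary_isometries_complete:
  assumes "isometry_mat D p1 J1" "isometry_mat D p2 J2" "adj J1 * J2 = 0\<^sub>m p1 p2" "p1 + p2 = D"
    and "q < D" "q' < D"
  shows "(\<Sum>k<p1. J1 $$ (q,k) * cnj (J1 $$ (q',k))) + (\<Sum>k<p2. J2 $$ (q,k) * cnj (J2 $$ (q',k))) = kd q q'"
proof -
  let ?W = "adj_append_cols D p1 J1 J2"
  have "kd q' q = (\<Sum>k<p1 + p2. ?W $$ (k,q') * cnj (?W $$ (k,q)))"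
    using unitary_mat_cols[OF unitary_adj_append_cols[OF assms(1-4)] assms(6,5)] assms(4) by simp
  also have "\<dots> = (\<Sum>k<p1. cnj (J1 $$ (q',k)) * J1 $$ (q,k)) + (\<Sum>k<p2. cnj (J2 $$ (q',k)) * J2 $$ (q,k))"
    unfolding sum_lessThan_add using assms(4-6) by (simp add: adj_append_cols_def)
  finally show ?thesis by (simp add: mult.commute kd_commute)
qed

lemma expand_in_complementary_isometries:
  fixes t :: "nat \<Rightarrow> complex"
  assumes "isometry_mat D p1 J1" "isometry_mat D p2 J2" "adj J1 * J2 = 0\<^sub>m p1 p2" "p1 + p2 = D"
    and "q' < D"
  shows "t q' = (\<Sum>k<p1. (\<Sum>q<D. t q * J1 $$ (q,k)) * cnj (J1 $$ (q',k)))
              + (\<Sum>k<p2. (\<Sum>q<D. t q * J2 $$ (q,k)) * cnj (J2 $$ (q',k)))"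
proof -
  have "(\<Sum>k<p1. (\<Sum>q<D. t q * J1 $$ (q,k)) * cnj (J1 $$ (q',k)))
      + (\<Sum>k<p2. (\<Sum>q<D. t q * J2 $$ (q,k)) * cnj (J2 $$ (q',k))) =
      (\<Sum>q<D. t q * ((\<Sum>k<p1. J1 $$ (q,k) * cnj (J1 $$ (q',k))) + (\<Sum>k<p2. J2 $$ (q,k) * cnj (J2 $$ (q',k)))))"
    by (simp add: sum_distrib_left sum_distrib_right distrib_left sum.distrib mult.assoc
        sum.swap[of _ "{..<D}"])
  also have "\<dots> = (\<Sum>q<D. t q * kd q q')"
    using assms by (intro sum.cong refl) (simp add: complementary_isometries_complete)
  finally show ?thesis using \<open>q' < D\<close> by simp
qed

lemma sum_mult_cnj_bilinear:
  "(\<Sum>f<m. (\<Sum>i<n. X f i * c i) * cnj (\<Sum>i<n. Y f i * c' i)) =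
   (\<Sum>i<n. \<Sum>i'<n. c i * cnj (c' i') * (\<Sum>f<m. X f i * cnj (Y f i')))"
proof -
  have "(\<Sum>f<m. (\<Sum>i<n. X f i * c i) * cnj (\<Sum>i<n. Y f i * c' i)) =
      (\<Sum>f<m. \<Sum>i<n. \<Sum>i'<n. c i * cnj (c' i') * (X f i * cnj (Y f i')))"
    unfolding cnj_sum complex_cnj_mult sum_product by (intro sum.cong refl) (simp add: mult_ac)
  also have "\<dots> = (\<Sum>i<n. \<Sum>i'<n. c i * cnj (c' i') * (\<Sum>f<m. X f i * cnj (Y f i')))"
    by (simp only: sum_distrib_left sum.swap[of _ "{..<m}"])
  finally show ?thesis .
qed

lemma comb_AB_entries_isometry_output:
  assumes comb: "comb_AB_entries p d T1" and K: "isometry_mat p p K"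
    and T: "\<And>x y f q a b. x < d \<Longrightarrow> y < d \<Longrightarrow> f < p \<Longrightarrow> q < p \<Longrightarrow> a < d \<Longrightarrow> b < d \<Longrightarrow>
      T x y f q a b = (\<Sum>f1<p. K $$ (f,f1) * T1 x y f1 q a b)"
  shows "comb_AB_entries p d T"
proof -
  obtain R2 R1 where c1: "\<And>q a b x y q' a' b' x' y'. q < p \<Longrightarrow> a < d \<Longrightarrow> b < d \<Longrightarrow> x < d \<Longrightarrow> y < d \<Longrightarrow>
      q' < p \<Longrightarrow> a' < d \<Longrightarrow> b' < d \<Longrightarrow> x' < d \<Longrightarrow> y' < d \<Longrightarrow>
      (\<Sum>f<p. T1 x y f q a b * cnj (T1 x' y' f q' a' b')) = kd b b' * R2 (q,a,x,y) (q',a',x',y')"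
    and c2: "\<And>q a x q' a' x'. q < p \<Longrightarrow> a < d \<Longrightarrow> x < d \<Longrightarrow> q' < p \<Longrightarrow> a' < d \<Longrightarrow> x' < d \<Longrightarrow>
      (\<Sum>y<d. R2 (q,a,x,y) (q',a',x',y)) = kd a a' * R1 (q,x) (q',x')"
    and c3: "\<And>q q'. q < p \<Longrightarrow> q' < p \<Longrightarrow> (\<Sum>x<d. R1 (q,x) (q',x)) = kd q q'"
    using comb by (elim comb_AB_entriesE) (rule that)
  show ?thesis
  proof (rule comb_AB_entriesI[of p d T R2 R1, OF _ c2 c3])
    fix q a b x y q' a' b' x' y'
    assume b: "q < p" "a < d" "b < d" "x < d" "y < d" "q' < p" "a' < d" "b' < d" "x' < d" "y' < d"
    have "(\<Sum>f<p. T x y f q a b * cnj (T x' y' f q' a' b')) =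
        (\<Sum>f<p. (\<Sum>f1<p. K $$ (f,f1) * T1 x y f1 q a b) * cnj (\<Sum>f1<p. K $$ (f,f1) * T1 x' y' f1 q' a' b'))"
      using b by (intro sum.cong refl) (simp add: T)
    also have "\<dots> = (\<Sum>f1<p. \<Sum>f1'<p. T1 x y f1 q a b * cnj (T1 x' y' f1' q' a' b') * kd f1 f1')"
      unfolding sum_mult_cnj_bilinear by (intro sum.cong refl) (simp add: isometry_mat_cols[OF K])
    also have "\<dots> = kd b b' * R2 (q,a,x,y) (q',a',x',y')"
      using b by (simp add: c1)
    finally show "(\<Sum>f<p. T x y f q a b * cnj (T x' y' f q' a' b')) = kd b b' * R2 (q,a,x,y) (q',a',x',y')" .
  qed
qed

lemma comb_AB_entries_unitary_past:
  assumes comb: "comb_AB_entries p d T1" and J: "unitary_mat p J"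
    and T: "\<And>x y f q a b. x < d \<Longrightarrow> y < d \<Longrightarrow> f < p \<Longrightarrow> q < p \<Longrightarrow> a < d \<Longrightarrow> b < d \<Longrightarrow>
      T x y f q a b = (\<Sum>q1<p. T1 x y f q1 a b * cnj (J $$ (q,q1)))"
  shows "comb_AB_entries p d T"
proof -
  obtain R2 R1 where c1: "\<And>q a b x y q' a' b' x' y'. q < p \<Longrightarrow> a < d \<Longrightarrow> b < d \<Longrightarrow> x < d \<Longrightarrow> y < d \<Longrightarrow>
      q' < p \<Longrightarrow> a' < d \<Longrightarrow> b' < d \<Longrightarrow> x' < d \<Longrightarrow> y' < d \<Longrightarrow>
      (\<Sum>f<p. T1 x y f q a b * cnj (T1 x' y' f q' a' b')) = kd b b' * R2 (q,a,x,y) (q',a',x',y')"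
    and c2: "\<And>q a x q' a' x'. q < p \<Longrightarrow> a < d \<Longrightarrow> x < d \<Longrightarrow> q' < p \<Longrightarrow> a' < d \<Longrightarrow> x' < d \<Longrightarrow>
      (\<Sum>y<d. R2 (q,a,x,y) (q',a',x',y)) = kd a a' * R1 (q,x) (q',x')"
    and c3: "\<And>q q'. q < p \<Longrightarrow> q' < p \<Longrightarrow> (\<Sum>x<d. R1 (q,x) (q',x)) = kd q q'"
    using comb by (elim comb_AB_entriesE) (rule that)
  define conj_J :: "nat \<Rightarrow> nat \<Rightarrow> (nat \<Rightarrow> nat \<Rightarrow> complex) \<Rightarrow> complex" where
    "conj_J q q' R = (\<Sum>q1<p. \<Sum>q1'<p. cnj (J $$ (q,q1)) * J $$ (q',q1') * R q1 q1')" for q q' R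
  show ?thesis
  proof (rule comb_AB_entriesI[of p d T
        "\<lambda>(q,a,x,y) (q',a',x',y'). conj_J q q' (\<lambda>q1 q1'. R2 (q1,a,x,y) (q1',a',x',y'))"
        "\<lambda>(q,x) (q',x'). conj_J q q' (\<lambda>q1 q1'. R1 (q1,x) (q1',x'))"])
    fix q a b x y q' a' b' x' y'
    assume b: "q < p" "a < d" "b < d" "x < d" "y < d" "q' < p" "a' < d" "b' < d" "x' < d" "y' < d"
    have "(\<Sum>f<p. T x y f q a b * cnj (T x' y' f q' a' b')) =
        (\<Sum>f<p. (\<Sum>q1<p. T1 x y f q1 a b * cnj (J $$ (q,q1))) * cnj (\<Sum>q1<p. T1 x' y' f q1 a' b' * cnj (J $$ (q',q1))))"
      using b by (intro sum.cong refl) (simp add: T)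
    also have "\<dots> = conj_J q q' (\<lambda>q1 q1'. kd b b' * R2 (q1,a,x,y) (q1',a',x',y'))"
      unfolding sum_mult_cnj_bilinear conj_J_def using b by (intro sum.cong refl) (simp add: c1)
    finally show "(\<Sum>f<p. T x y f q a b * cnj (T x' y' f q' a' b')) =
        kd b b' * (\<lambda>(q,a,x,y) (q',a',x',y'). conj_J q q' (\<lambda>q1 q1'. R2 (q1,a,x,y) (q1',a',x',y'))) (q,a,x,y) (q',a',x',y')"
      by (simp add: conj_J_def sum_distrib_left mult_ac)
  next
    fix q a x q' a' x' assume b: "q < p" "a < d" "x < d" "q' < p" "a' < d" "x' < d"
    have "(\<Sum>y<d. conj_J q q' (\<lambda>q1 q1'. R2 (q1,a,x,y) (q1',a',x',y))) =
        conj_J q q' (\<lambda>q1 q1'. \<Sum>y<d. R2 (q1,a,x,y) (q1',a',x',y))"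
      by (simp add: conj_J_def sum_distrib_left sum.swap[of _ "{..<d}"])
    also have "\<dots> = kd a a' * conj_J q q' (\<lambda>q1 q1'. R1 (q1,x) (q1',x'))"
      unfolding conj_J_def using b by (simp add: c2 sum_distrib_left mult_ac)
    finally show "(\<Sum>y<d. (\<lambda>(q,a,x,y) (q',a',x',y'). conj_J q q' (\<lambda>q1 q1'. R2 (q1,a,x,y) (q1',a',x',y')))
        (q,a,x,y) (q',a',x',y)) = kd a a' * (\<lambda>(q,x) (q',x'). conj_J q q' (\<lambda>q1 q1'. R1 (q1,x) (q1',x'))) (q,x) (q',x')"
      by simp
  next
    fix q q' assume "q < p" "q' < p"
    have "(\<Sum>x<d. conj_J q q' (\<lambda>q1 q1'. R1 (q1,x) (q1',x))) =
        conj_J q q' (\<lambda>q1 q1'. \<Sum>x<d. R1 (q1,x) (q1',x))"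
      by (simp add: conj_J_def sum_distrib_left sum.swap[of _ "{..<d}"])
    also have "\<dots> = conj_J q q' kd"
      unfolding conj_J_def by (intro sum.cong refl) (simp add: c3)
    also have "\<dots> = cnj (\<Sum>q1<p. J $$ (q,q1) * cnj (J $$ (q',q1)))"
      by (simp add: conj_J_def cnj_sum mult.commute)
    also have "\<dots> = kd q q'"
      using unitary_mat_rows[OF J \<open>q < p\<close> \<open>q' < p\<close>] by simp
    finally show "(\<Sum>x<d. (\<lambda>(q,x) (q',x'). conj_J q q' (\<lambda>q1 q1'. R1 (q1,x) (q1',x'))) (q,x) (q',x)) = kd q q'"
      by simp
  qed
qed

lemma kron_intertwining_entries:
  assumes U: "U \<in> carrier_mat (d*d*D) (D*d*d)" and J: "J \<in> carrier_mat D p"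
    and K: "K \<in> carrier_mat D f" and W: "W \<in> carrier_mat (d*d*f) (p*d*d)"
    and eq: "U * kron (kron J (1\<^sub>m d)) (1\<^sub>m d) = kron (kron (1\<^sub>m d) (1\<^sub>m d)) K * W"
    and b: "x < d" "y < d" "g < D" "q1 < p" "a < d" "b < d"
  shows "(\<Sum>q<D. opent d d D d d U x y g q a b * J $$ (q,q1)) =
    (\<Sum>f1<f. K $$ (g,f1) * opent d d f d d W x y f1 q1 a b)"
proof -
  have i: "tidx3 d D x y g < d*d*D" and j: "tidx3 d d q1 a b < p*d*d"
    using b by (simp_all add: tidx3_less)
  have "(\<Sum>q<D. U $$ (tidx3 d D x y g, tidx3 d d q a b) * J $$ (q,q1)) =
      (U * kron (kron J (1\<^sub>m d)) (1\<^sub>m d)) $$ (tidx3 d D x y g, tidx3 d d q1 a b)"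
    using index_mult_kron_one_one[OF U J i b(4-6)] ..
  also have "\<dots> = (\<Sum>f1<f. K $$ (g,f1) * W $$ (tidx3 d f x y f1, tidx3 d d q1 a b))"
    unfolding eq by (rule index_kron_one_one_mult[OF K W b(1-3) j])
  finally show ?thesis by (simp add: opent_def)
qed

text \<open>\<open>U\<close> restricts to \<open>K\<^sub>i W\<^sub>i\<close> on the range of \<open>J\<^sub>i\<close>, hence \<open>U = K\<^sub>1 W\<^sub>1 J\<^sub>1\<^sup>\<dagger> + K\<^sub>2 W\<^sub>2 J\<^sub>2\<^sup>\<dagger>\<close>;
  the dimension count \<open>d d f\<^sub>i = p\<^sub>i d d\<close> of the unitary \<open>W\<^sub>i\<close> gives \<open>f\<^sub>i = p\<^sub>i\<close>.\<close>

lemma direct_sum_pure_combs_entries: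
  assumes U: "U \<in> carrier_mat (d*d*D) (D*d*d)" and dsum: "direct_sum_pure_combs d D U" and "0 < d"
  obtains p1 p2 J1 J2 K1 K2 T1 T2 where
    "p1 + p2 = D"
    "isometry_mat D p1 J1" "isometry_mat D p2 J2" "adj J1 * J2 = 0\<^sub>m p1 p2"
    "isometry_mat D p1 K1" "isometry_mat D p2 K2" "adj K1 * K2 = 0\<^sub>m p1 p2"
    "orthonormal_rows p1 d T1" "comb_AB_entries p1 d T1"
    "orthonormal_rows p2 d T2" "comb_AB_entries p2 d (swap_slots T2)"
    "\<And>x y f q a b. x < d \<Longrightarrow> y < d \<Longrightarrow> f < D \<Longrightarrow> q < D \<Longrightarrow> a < d \<Longrightarrow> b < d \<Longrightarrow>
       opent d d D d d U x y f q a b =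
         (\<Sum>q1<p1. (\<Sum>f1<p1. K1 $$ (f,f1) * T1 x y f1 q1 a b) * cnj (J1 $$ (q,q1)))
       + (\<Sum>q2<p2. (\<Sum>f2<p2. K2 $$ (f,f2) * T2 x y f2 q2 a b) * cnj (J2 $$ (q,q2)))"
proof -
  obtain p1 p2 f1 f2 J1 J2 K1 K2 W1 W2 where
    D: "p1 + p2 = D" and J: "isometry_mat D p1 J1" "isometry_mat D p2 J2" "adj J1 * J2 = 0\<^sub>m p1 p2"
    and K: "isometry_mat D f1 K1" "isometry_mat D f2 K2" "adj K1 * K2 = 0\<^sub>m f1 f2"
    and W1: "W1 \<in> carrier_mat (d*d*f1) (p1*d*d)" "unitary_mat (p1*d*d) W1"
    and W2: "W2 \<in> carrier_mat (d*d*f2) (p2*d*d)" "unitary_mat (p2*d*d) W2"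
    and comb: "comb_AB p1 d d d d f1 W1" "comb_BA p2 d d d d f2 W2"
    and eq1: "U * kron (kron J1 (1\<^sub>m d)) (1\<^sub>m d) = kron (kron (1\<^sub>m d) (1\<^sub>m d)) K1 * W1"
    and eq2: "U * kron (kron J2 (1\<^sub>m d)) (1\<^sub>m d) = kron (kron (1\<^sub>m d) (1\<^sub>m d)) K2 * W2"
    using dsum unfolding direct_sum_pure_combs_def by blast
  have "d * d * f1 = d * d * p1" "d * d * f2 = d * d * p2"
    using W1 W2 by (auto simp: unitary_mat_def mult_ac)
  then have f: "f1 = p1" "f2 = p2" using \<open>0 < d\<close> by simp_all
  define T1 where "T1 = opent d d p1 d d W1"
  define T2 where "T2 = opent d d p2 d d W2"
  have J1c: "J1 \<in> carrier_mat D p1" and J2c: "J2 \<in> carrier_mat D p2"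
    and K1c: "K1 \<in> carrier_mat D p1" and K2c: "K2 \<in> carrier_mat D p2"
    using J K f by (auto simp: isometry_mat_def)
  show thesis
  proof (rule that[OF D J K[unfolded f]])
    show "orthonormal_rows p1 d T1" "orthonormal_rows p2 d T2"
      using W1 W2 f by (simp_all add: T1_def T2_def orthonormal_rows_opent)
    show "comb_AB_entries p1 d T1" "comb_AB_entries p2 d (swap_slots T2)"
      using comb f by (simp_all add: T1_def T2_def comb_AB_iff comb_BA_iff)
    fix x y g q a b assume b: "x < d" "y < d" "g < D" "q < D" "a < d" "b < d"
    show "opent d d D d d U x y g q a b =
         (\<Sum>q1<p1. (\<Sum>f1<p1. K1 $$ (g,f1) * T1 x y f1 q1 a b) * cnj (J1 $$ (q,q1)))
       + (\<Sum>q2<p2. (\<Sum>f2<p2. K2 $$ (g,f2) * T2 x y f2 q2 a b) * cnj (J2 $$ (q,q2)))"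
      using expand_in_complementary_isometries[OF J D b(4), of "\<lambda>q. opent d d D d d U x y g q a b"]
        kron_intertwining_entries[OF U J1c K1c _ eq1 b(1-3) _ b(5,6)]
        kron_intertwining_entries[OF U J2c K2c _ eq2 b(1-3) _ b(5,6)] W1 W2 f
      by (simp add: T1_def T2_def)
  qed
qed

lemma comb_AB_entries_conj:
  assumes comb: "comb_AB_entries p d T1" and K: "isometry_mat p p K" and J: "isometry_mat p p J"
    and T: "\<And>x y f q a b. x < d \<Longrightarrow> y < d \<Longrightarrow> f < p \<Longrightarrow> q < p \<Longrightarrow> a < d \<Longrightarrow> b < d \<Longrightarrow>
      T x y f q a b = (\<Sum>q1<p. (\<Sum>f1<p. K $$ (f,f1) * T1 x y f1 q1 a b) * cnj (J $$ (q,q1)))"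
  shows "comb_AB_entries p d T"
proof (rule comb_AB_entries_isometry_output[OF _ K])
  show "comb_AB_entries p d (\<lambda>x y f q a b. \<Sum>q1<p. T1 x y f q1 a b * cnj (J $$ (q,q1)))"
    by (rule comb_AB_entries_unitary_past[OF comb isometry_mat_square_unitary[OF J]]) simp
  fix x y f q a b assume "x < d" "y < d" "f < p" "q < p" "a < d" "b < d"
  then have "T x y f q a b = (\<Sum>q1<p. \<Sum>f1<p. K $$ (f,f1) * T1 x y f1 q1 a b * cnj (J $$ (q,q1)))"
    by (simp add: T sum_distrib_right)
  also have "\<dots> = (\<Sum>f1<p. \<Sum>q1<p. K $$ (f,f1) * T1 x y f1 q1 a b * cnj (J $$ (q,q1)))"
    by (rule sum.swap)
  finally show "T x y f q a b = (\<Sum>f1<p. K $$ (f,f1) * (\<Sum>q1<p. T1 x y f1 q1 a b * cnj (J $$ (q,q1))))"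
    by (simp add: sum_distrib_left mult.assoc)
qed

lemma direct_sum_of_unitary_product_forms:
  assumes J: "isometry_mat D d J1" "isometry_mat D d J2" "adj J1 * J2 = 0\<^sub>m d d"
    and K: "isometry_mat D d K1" "isometry_mat D d K2" "adj K1 * K2 = 0\<^sub>m d d"
    and D: "D = 2 * d"
    and T1: "unitary_product_form d T1" and T2: "unitary_product_form d (swap_slots T2)"
    and U: "\<And>x y f q a b. x < d \<Longrightarrow> y < d \<Longrightarrow> f < D \<Longrightarrow> q < D \<Longrightarrow> a < d \<Longrightarrow> b < d \<Longrightarrow>
       opent d d D d d U x y f q a b =
         (\<Sum>q1<d. (\<Sum>f1<d. K1 $$ (f,f1) * T1 x y f1 q1 a b) * cnj (J1 $$ (q,q1)))
       + (\<Sum>q2<d. (\<Sum>f2<d. K2 $$ (f,f2) * T2 x y f2 q2 a b) * cnj (J2 $$ (q,q2)))"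
  shows "\<exists>WP WF U0 U1 U2 V0 V1 V2.
          unitary_mat D WP \<and> unitary_mat D WF \<and>
          unitary_mat d U0 \<and> unitary_mat d U1 \<and> unitary_mat d U2 \<and>
          unitary_mat d V0 \<and> unitary_mat d V1 \<and> unitary_mat d V2 \<and>
          (\<forall>ai<d. \<forall>bi<d. \<forall>fi<D. \<forall>p<D. \<forall>ao<d. \<forall>bo<d.
             opent d d D d d U ai bi fi p ao bo =
               (\<Sum>c<2. \<Sum>ft<d. \<Sum>pt<d.
                  cnj (WF $$ (tidx2 d c ft, fi)) *
                  (if c = 0 then U0 $$ (ai,pt) * U1 $$ (bi,ao) * U2 $$ (ft,bo)
                   else V0 $$ (bi,pt) * V1 $$ (ai,bo) * V2 $$ (ft,ao)) *
                  WP $$ (tidx2 d c pt, p)))"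
proof -
  obtain U0 U1 U2 where U012: "unitary_mat d U0" "unitary_mat d U1" "unitary_mat d U2"
    and T1: "\<forall>x<d. \<forall>y<d. \<forall>f<d. \<forall>q<d. \<forall>a<d. \<forall>b<d. T1 x y f q a b = U0 $$ (x,q) * U1 $$ (y,a) * U2 $$ (f,b)"
    using T1 unfolding unitary_product_form_def by blast
  obtain V0 V1 V2 where V012: "unitary_mat d V0" "unitary_mat d V1" "unitary_mat d V2"
    and T2: "\<forall>x<d. \<forall>y<d. \<forall>f<d. \<forall>q<d. \<forall>a<d. \<forall>b<d.
      swap_slots T2 x y f q a b = V0 $$ (x,q) * V1 $$ (y,a) * V2 $$ (f,b)"
    using T2 unfolding unitary_product_form_def by blast
  define WP where "WP = adj_append_cols D d J1 J2"
  define WF where "WF = adj_append_cols D d K1 K2"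
  have "unitary_mat D WP" "unitary_mat D WF"
    using unitary_adj_append_cols[OF J] unitary_adj_append_cols[OF K] D by (simp_all add: WP_def WF_def)
  moreover have "\<forall>ai<d. \<forall>bi<d. \<forall>fi<D. \<forall>p<D. \<forall>ao<d. \<forall>bo<d.
             opent d d D d d U ai bi fi p ao bo =
               (\<Sum>c<2. \<Sum>ft<d. \<Sum>pt<d.
                  cnj (WF $$ (tidx2 d c ft, fi)) *
                  (if c = 0 then U0 $$ (ai,pt) * U1 $$ (bi,ao) * U2 $$ (ft,bo)
                   else V0 $$ (bi,pt) * V1 $$ (ai,bo) * V2 $$ (ft,ao)) *
                  WP $$ (tidx2 d c pt, p))"
  proof (intro allI impI)
    fix ai bi fi p ao bo assume b: "ai < d" "bi < d" "fi < D" "p < D" "ao < d" "bo < d"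
    have "(\<Sum>q1<d. (\<Sum>f1<d. K1 $$ (fi,f1) * T1 ai bi f1 q1 ao bo) * cnj (J1 $$ (p,q1))) =
        (\<Sum>ft<d. \<Sum>pt<d. cnj (WF $$ (tidx2 d 0 ft, fi)) *
          (U0 $$ (ai,pt) * U1 $$ (bi,ao) * U2 $$ (ft,bo)) * WP $$ (tidx2 d 0 pt, p))"
      unfolding sum_distrib_right using b D
      by (subst sum.swap) (intro sum.cong refl; simp add: WF_def WP_def adj_append_cols_def tidx2_def T1)
    moreover have "(\<Sum>q2<d. (\<Sum>f2<d. K2 $$ (fi,f2) * T2 ai bi f2 q2 ao bo) * cnj (J2 $$ (p,q2))) =
        (\<Sum>ft<d. \<Sum>pt<d. cnj (WF $$ (tidx2 d 1 ft, fi)) *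
          (V0 $$ (bi,pt) * V1 $$ (ai,bo) * V2 $$ (ft,ao)) * WP $$ (tidx2 d 1 pt, p))"
      unfolding sum_distrib_right using b D
      by (subst sum.swap)
        (intro sum.cong refl; simp add: WF_def WP_def adj_append_cols_def tidx2_def T2[unfolded swap_slots_def])
    ultimately show "opent d d D d d U ai bi fi p ao bo =
               (\<Sum>c<2. \<Sum>ft<d. \<Sum>pt<d.
                  cnj (WF $$ (tidx2 d c ft, fi)) *
                  (if c = 0 then U0 $$ (ai,pt) * U1 $$ (bi,ao) * U2 $$ (ft,bo)
                   else V0 $$ (bi,pt) * V1 $$ (ai,bo) * V2 $$ (ft,ao)) *
                  WP $$ (tidx2 d c pt, p))"
      using U[OF b] by (simp add: numeral_2_eq_2)
  qed
  ultimately show ?thesis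
    using U012 V012
    apply -
    apply (rule exI[of _ WP], rule exI[of _ WF], rule exI[of _ U0], rule exI[of _ U1], rule exI[of _ U2],
        rule exI[of _ V0], rule exI[of _ V1], rule exI[of _ V2])
    by blast
qed

lemma direct_sum_pure_combs_cases:
  assumes U: "U \<in> carrier_mat (d*d*D) (D*d*d)" and dsum: "direct_sum_pure_combs d D U"
    and "0 < d" "D \<le> 2 * d"
  shows "comb_AB_entries D d (opent d d D d d U) \<or> comb_AB_entries D d (swap_slots (opent d d D d d U)) \<or>
    D = 2 * d \<and>
      (\<exists>WP WF U0 U1 U2 V0 V1 V2.
          unitary_mat D WP \<and> unitary_mat D WF \<and>
          unitary_mat d U0 \<and> unitary_mat d U1 \<and> unitary_mat d U2 \<and>
          unitary_mat d V0 \<and> unitary_mat d V1 \<and> unitary_mat d V2 \<and>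
          (\<forall>ai<d. \<forall>bi<d. \<forall>fi<D. \<forall>p<D. \<forall>ao<d. \<forall>bo<d.
             opent d d D d d U ai bi fi p ao bo =
               (\<Sum>c<2. \<Sum>ft<d. \<Sum>pt<d.
                  cnj (WF $$ (tidx2 d c ft, fi)) *
                  (if c = 0 then U0 $$ (ai,pt) * U1 $$ (bi,ao) * U2 $$ (ft,bo)
                   else V0 $$ (bi,pt) * V1 $$ (ai,bo) * V2 $$ (ft,ao)) *
                  WP $$ (tidx2 d c pt, p))))"
proof -
  obtain p1 p2 J1 J2 K1 K2 T1 T2 where D: "p1 + p2 = D"
    and J: "isometry_mat D p1 J1" "isometry_mat D p2 J2" "adj J1 * J2 = 0\<^sub>m p1 p2"
    and K: "isometry_mat D p1 K1" "isometry_mat D p2 K2" "adj K1 * K2 = 0\<^sub>m p1 p2"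
    and T1: "orthonormal_rows p1 d T1" "comb_AB_entries p1 d T1"
    and T2: "orthonormal_rows p2 d T2" "comb_AB_entries p2 d (swap_slots T2)"
    and U_eq: "\<And>x y f q a b. x < d \<Longrightarrow> y < d \<Longrightarrow> f < D \<Longrightarrow> q < D \<Longrightarrow> a < d \<Longrightarrow> b < d \<Longrightarrow>
       opent d d D d d U x y f q a b =
         (\<Sum>q1<p1. (\<Sum>f1<p1. K1 $$ (f,f1) * T1 x y f1 q1 a b) * cnj (J1 $$ (q,q1)))
       + (\<Sum>q2<p2. (\<Sum>f2<p2. K2 $$ (f,f2) * T2 x y f2 q2 a b) * cnj (J2 $$ (q,q2)))"
    by (rule direct_sum_pure_combs_entries[OF U dsum \<open>0 < d\<close>]) (rule that)
  consider "p2 = 0" | "p1 = 0" | "0 < p1" "0 < p2" by auto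
  then show ?thesis
  proof cases
    case 1
    with D have p1: "p1 = D" by simp
    have "comb_AB_entries D d (opent d d D d d U)"
    proof (rule comb_AB_entries_conj[OF T1(2)[unfolded p1] K(1)[unfolded p1] J(1)[unfolded p1]])
      fix x y f q a b assume "x < d" "y < d" "f < D" "q < D" "a < d" "b < d"
      from U_eq[OF this] show "opent d d D d d U x y f q a b =
          (\<Sum>q1<D. (\<Sum>f1<D. K1 $$ (f,f1) * T1 x y f1 q1 a b) * cnj (J1 $$ (q,q1)))"
        by (simp add: 1 p1)
    qed
    then show ?thesis ..
  next
    case 2
    with D have p2: "p2 = D" by simp
    have "comb_AB_entries D d (swap_slots (opent d d D d d U))"
    proof (rule comb_AB_entries_conj[OF T2(2)[unfolded p2] K(2)[unfolded p2] J(2)[unfolded p2]])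
      fix x y f q a b assume "x < d" "y < d" "f < D" "q < D" "a < d" "b < d"
      from U_eq[of y x f q b a] this show "swap_slots (opent d d D d d U) x y f q a b =
          (\<Sum>q1<D. (\<Sum>f1<D. K2 $$ (f,f1) * swap_slots T2 x y f1 q1 a b) * cnj (J2 $$ (q,q1)))"
        by (simp add: 2 p2 swap_slots_def)
    qed
    then show ?thesis by simp
  next
    case 3
    with D \<open>D \<le> 2 * d\<close> have "p1 < 2 * d" "p2 < 2 * d" by simp_all
    with 3 have T1': "p1 = d \<and> unitary_product_form d T1"
      and T2': "p2 = d \<and> unitary_product_form d (swap_slots T2)"
      using comb_AB_entries_product_form[OF T1] T2(2)
        comb_AB_entries_product_form[OF orthonormal_rows_swap_slots[OF T2(1)]] by simp_all
    then have p: "p1 = d" "p2 = d" and "D = 2 * d" using D by simp_all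
    moreover note direct_sum_of_unitary_product_forms[OF J[unfolded p] K[unfolded p] \<open>D = 2 * d\<close>
        T1'[THEN conjunct2] T2'[THEN conjunct2] U_eq[unfolded p]]
    ultimately show ?thesis by (intro disjI2 conjI)
  qed
qed

lemma causally_ordered_iff:
  "causally_ordered p d d d d p V \<longleftrightarrow>
     comb_AB_entries p d (opent d d p d d V) \<or> comb_AB_entries p d (swap_slots (opent d d p d d V))"
  by (simp add: causally_ordered_def comb_AB_iff comb_BA_iff)

theorem corollary5:
  fixes d D :: nat and U :: "complex mat"
  assumes U_dim: "U \<in> carrier_mat (d*d*D) (D*d*d)"
    and U_unitary: "unitary_mat (D*d*d) U"
    and U_dsum: "direct_sum_pure_combs d D U"
  shows
   "(D = d \<longrightarrow>
      causally_ordered D d d d d D U \<and>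
      ((\<exists>U0 U1 U2. unitary_mat d U0 \<and> unitary_mat d U1 \<and> unitary_mat d U2 \<and>
          (\<forall>ai<d. \<forall>bi<d. \<forall>fi<D. \<forall>p<D. \<forall>ao<d. \<forall>bo<d.
             opent d d D d d U ai bi fi p ao bo = U0 $$ (ai,p) * U1 $$ (bi,ao) * U2 $$ (fi,bo)))
       \<or>
       (\<exists>V0 V1 V2. unitary_mat d V0 \<and> unitary_mat d V1 \<and> unitary_mat d V2 \<and>
          (\<forall>ai<d. \<forall>bi<d. \<forall>fi<D. \<forall>p<D. \<forall>ao<d. \<forall>bo<d.
             opent d d D d d U ai bi fi p ao bo = V0 $$ (bi,p) * V1 $$ (ai,bo) * V2 $$ (fi,ao)))))
    \<and>
    (D = 2*d \<longrightarrow>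
      causally_ordered D d d d d D U \<or>
      (\<exists>WP WF U0 U1 U2 V0 V1 V2.
          unitary_mat D WP \<and> unitary_mat D WF \<and>
          unitary_mat d U0 \<and> unitary_mat d U1 \<and> unitary_mat d U2 \<and>
          unitary_mat d V0 \<and> unitary_mat d V1 \<and> unitary_mat d V2 \<and>
          (\<forall>ai<d. \<forall>bi<d. \<forall>fi<D. \<forall>p<D. \<forall>ao<d. \<forall>bo<d.
             opent d d D d d U ai bi fi p ao bo =
               (\<Sum>c<2. \<Sum>ft<d. \<Sum>pt<d.
                  cnj (WF $$ (tidx2 d c ft, fi)) *
                  (if c = 0 then U0 $$ (ai,pt) * U1 $$ (bi,ao) * U2 $$ (ft,bo)
                   else V0 $$ (bi,pt) * V1 $$ (ai,bo) * V2 $$ (ft,ao)) *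
                  WP $$ (tidx2 d c pt, p)))))"
proof (cases "d = 0")
  case True
  have "unitary_mat 0 (1\<^sub>m 0 :: complex mat)" by (auto simp: unitary_mat_def)
  with True show ?thesis by (auto simp: causally_ordered_def comb_AB_def)
next
  case False
  let ?T = "opent d d D d d U"
  have rows: "orthonormal_rows D d ?T" by (rule orthonormal_rows_opent[OF U_dim U_unitary])
  note cases = direct_sum_pure_combs_cases[OF U_dim U_dsum]
  show ?thesis (is "(_ \<longrightarrow> ?square) \<and> (_ \<longrightarrow> ?double)")
  proof (rule conjI; rule impI)
    assume "D = d"
    with cases False have "comb_AB_entries D d ?T \<or> comb_AB_entries D d (swap_slots ?T)" by auto
    then show ?square
    proof
      assume "comb_AB_entries D d ?T"
      with comb_AB_entries_product_form[OF rows this] \<open>D = d\<close> False show ?thesis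
        by (auto simp: causally_ordered_iff unitary_product_form_def)
    next
      assume BA: "comb_AB_entries D d (swap_slots ?T)"
      from comb_AB_entries_product_form[OF orthonormal_rows_swap_slots[OF rows] BA] False \<open>D = d\<close>
      have "unitary_product_form d (swap_slots ?T)" by simp
      from unitary_product_form_swap_slotsD[OF this] BA show ?thesis
        unfolding causally_ordered_iff \<open>D = d\<close> by blast
    qed
  next
    assume "D = 2 * d"
    with cases False show ?double
      by (simp add: causally_ordered_iff)
  qed
qed

end
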